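(* Let $r\ge3$ and $1\le s\le r-1$, let $\Gamma=C(r,s)$ be a Praeger-Xu graph, and let $g\in\mathrm{Aut}(\Gamma)$, $g\ne 1$, with $\mathrm{fpr}(E\Gamma,g)>1/3$. Then $3s<2r-3$, and either $g\in K$ or $(r,s)=(4,1)$. Moreover, every edge fixed (setwise) by $g$ has both of its end-vertices fixed by $g$.
   Context: Praeger-Xu graphs: the digraph $\vec C(r,1)$ has vertex set $\mathbb{Z}_r\times\mathbb{Z}_2$ and arcs $((x,i),(x+1,j))$ for all $x$, $i,j$. For $2\le s\le r-1$, $\vec C(r,s)$ has as vertices the sequences $(v_0,\dots,v_{s-1})$ with each $(v_j,v_{j+1})$ an arc of $\vec C(r,1)$, with an arc from $(v_0,\dots,v_{s-1})$ to $(v_1,\dots,v_{s-1},u)$ for each out-neighbour $u$ of $v_{s-1}$. $C(r,s)$ is the underlying undirected simple graph of $\vec C(r,s)$ (for $s=1$, of $\vec C(r,1)$). For $i\in\mathbb{Z}_r$, $\tau_i$ is the permutation of $\mathbb{Z}_r\times\mathbb{Z}_2$ swapping $(i,0)$ and $(i,1)$ and fixing all other points; it acts on vertices of $C(r,s)$ coordinatewise and is an automorphism. $K=\langle\tau_i: i\in\mathbb{Z}_r\rangle\cong C_2^r$. $\mathrm{fpr}(E\Gamma,g)$ is the proportion of edges $\{a,b\}$ with $\{a^g,b^g\}=\{a,b\}$. *)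

theory Defs
  imports Main "HOL.Real"
begin

text \<open>Points of Z_r x Z_2, represented as pairs (x,i) with x < r and i < 2.\<close>
definition PXpt :: "nat \<Rightarrow> (nat \<times> nat) set" where
  "PXpt r = {(x, i). x < r \<and> i < 2}"

definition PXarc1 :: "nat \<Rightarrow> nat \<times> nat \<Rightarrow> nat \<times> nat \<Rightarrow> bool" where
  "PXarc1 r p q \<longleftrightarrow> p \<in> PXpt r \<and> q \<in> PXpt r \<and> fst q = (fst p + 1) mod r"

definition PXV :: "nat \<Rightarrow> nat \<Rightarrow> (nat \<times> nat) list set" where
  "PXV r s = {vs. length vs = s \<and> set vs \<subseteq> PXpt r \<and>
                 (\<forall>j. Suc j < s \<longrightarrow> PXarc1 r (vs ! j) (vs ! Suc j))}"

definition PXarc :: "nat \<Rightarrow> nat \<Rightarrow> (nat \<times> nat) list \<Rightarrow> (nat \<times> nat) list \<Rightarrow> bool" where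
  "PXarc r s v w \<longleftrightarrow> v \<in> PXV r s \<and> w \<in> PXV r s \<and> tl v = butlast w \<and> PXarc1 r (last v) (last w)"

definition PXadj :: "nat \<Rightarrow> nat \<Rightarrow> (nat \<times> nat) list \<Rightarrow> (nat \<times> nat) list \<Rightarrow> bool" where
  "PXadj r s a b \<longleftrightarrow> a \<noteq> b \<and> (PXarc r s a b \<or> PXarc r s b a)"

definition PXE :: "nat \<Rightarrow> nat \<Rightarrow> (nat \<times> nat) list set set" where
  "PXE r s = {{a, b} | a b. PXadj r s a b}"

definition is_graph_aut :: "'v set \<Rightarrow> ('v \<Rightarrow> 'v \<Rightarrow> bool) \<Rightarrow> ('v \<Rightarrow> 'v) \<Rightarrow> bool" where
  "is_graph_aut V adj g \<longleftrightarrow> bij_betw g V V \<and> (\<forall>a\<in>V. \<forall>b\<in>V. adj a b \<longleftrightarrow> adj (g a) (g b))"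

definition PXtau :: "nat \<Rightarrow> nat \<times> nat \<Rightarrow> nat \<times> nat" where
  "PXtau i p = (if fst p = i then (fst p, 1 - snd p) else p)"

inductive_set PXK :: "nat \<Rightarrow> (nat \<times> nat \<Rightarrow> nat \<times> nat) set" for r where
  PXK_id: "id \<in> PXK r"
| PXK_step: "f \<in> PXK r \<Longrightarrow> i < r \<Longrightarrow> PXtau i \<circ> f \<in> PXK r"

definition fpr_edges :: "'v set set \<Rightarrow> ('v \<Rightarrow> 'v) \<Rightarrow> real" where
  "fpr_edges E g = real (card {e \<in> E. g ` e = e}) / real (card E)"

end

theory Submission
  imports Defs
begin

text \<open>Two out-neighbours (or two in-neighbours) of a vertex of \<open>C(r, s)\<close> have more common
  neighbours than an out-neighbour and an in-neighbour, as long as \<open>r \<noteq> 4\<close>. Hence for \<open>r \<noteq> 4\<close>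
  an automorphism either preserves or reverses every arc, and correspondingly rotates or
  reflects the cycle of layers. A reflection fixes at most \<open>2 \<cdot> 2^s\<close> of the \<open>r \<cdot> 2^(s+1)\<close> edges and
  a nontrivial rotation fixes none, so \<open>fpr > 1/3\<close> forces \<open>g\<close> to fix all layers and preserve arcs.
  Then the \<open>i\<close>-th point of \<open>g v\<close> depends only on the \<open>i\<close>-th point of \<open>v\<close>, i.e. \<open>g\<close> acts
  coordinatewise by an element of \<open>K\<close>. An edge fixed by such a \<open>g\<close> has both ends fixed and avoids
  the \<open>s + 1\<close> layers meeting a layer whose two points \<open>g\<close> swaps; this leaves at most
  \<open>2 (r - s - 1) 2^s\<close> fixed edges, whence \<open>3 s < 2 r - 3\<close>.

  For \<open>r = 4\<close> the graph is bipartite by the parity of the layer. If \<open>s = 1\<close> it is complete bipartite, and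
  an automorphism swapping the ends of an edge exchanges the two colour classes and fixes at most
  4 of the 16 edges. For \<open>s = 2, 3\<close> a finite check shows that an automorphism fixing a vertex and
  its neighbourhood is trivial and that distinct vertices have at most two common neighbours;
  double counting the edges between fixed and moved vertices then shows that at most a quarter
  of the edges are fixed.\<close>

lemma mod_add_left_cancel_nat: "((a::nat) + b) mod n = (a + c) mod n \<longleftrightarrow> b mod n = c mod n"
proof (cases "b \<le> c")
  case True
  then show ?thesis using mod_eq_dvd_iff_nat[of "a+b" "a+c" n] mod_eq_dvd_iff_nat[of b c n] by (simp add: eq_commute)
next
  case False
  then show ?thesis using mod_eq_dvd_iff_nat[of "a+c" "a+b" n] mod_eq_dvd_iff_nat[of c b n] by auto
qed

lemma add_mod_eq_self_iff: "(x::nat) < n \<Longrightarrow> (x + k) mod n = x \<longleftrightarrow> k mod n = 0"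
  using mod_add_left_cancel_nat[of x k n 0] by simp

section \<open>The graph \<open>C(r, s)\<close>\<close>

locale praeger_xu =
  fixes r s :: nat
  assumes r_ge_3: "3 \<le> r" and s_pos: "1 \<le> s" and s_less_r: "s < r"
begin

abbreviation "V \<equiv> PXV r s"

definition layer :: "(nat \<times> nat) list \<Rightarrow> nat" where "layer v = fst (v ! 0)"

lemma PXV_iff: "v \<in> V \<longleftrightarrow> length v = s \<and> layer v < r \<and>
   (\<forall>j<s. fst (v!j) = (layer v + j) mod r \<and> snd (v!j) < 2)"
proof
  assume v: "v \<in> V"
  hence len: "length v = s" and sub: "set v \<subseteq> PXpt r"
    and arc: "\<And>j. Suc j < s \<Longrightarrow> PXarc1 r (v ! j) (v ! Suc j)"
    by (auto simp: PXV_def)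
  have pt: "j < s \<Longrightarrow> fst (v!j) < r \<and> snd (v!j) < 2" for j
  proof -
    assume "j < s" then have "v!j \<in> set v" using len by simp
    then have "v!j \<in> PXpt r" using sub by blast
    then show ?thesis by (auto simp: PXpt_def)
  qed
  have l: "layer v < r" using pt[of 0] s_pos by (simp add: layer_def)
  have "j < s \<Longrightarrow> fst (v!j) = (layer v + j) mod r" for j
  proof (induction j)
    case 0 then show ?case using l by (simp add: layer_def)
  next
    case (Suc j)
    then have "fst (v ! Suc j) = (fst (v!j) + 1) mod r" using arc[of j] by (simp add: PXarc1_def)
    also have "\<dots> = (layer v + Suc j) mod r" using Suc by (simp add: mod_Suc_eq)
    finally show ?case .
  qed
  then show "length v = s \<and> layer v < r \<and> (\<forall>j<s. fst (v!j) = (layer v + j) mod r \<and> snd (v!j) < 2)"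
    using len l pt by auto
next
  assume h: "length v = s \<and> layer v < r \<and> (\<forall>j<s. fst (v!j) = (layer v + j) mod r \<and> snd (v!j) < 2)"
  have "set v \<subseteq> PXpt r"
  proof
    fix p assume "p \<in> set v"
    then obtain j where "j < s" "p = v!j" using h by (auto simp: in_set_conv_nth)
    then have "fst p < r" "snd p < 2" using h r_ge_3 by auto
    then show "p \<in> PXpt r" by (cases p) (auto simp: PXpt_def)
  qed
  moreover have "PXarc1 r (v ! j) (v ! Suc j)" if "Suc j < s" for j
    using h that r_ge_3 \<open>set v \<subseteq> PXpt r\<close> nth_mem[of j v] nth_mem[of "Suc j" v]
    by (auto simp: PXarc1_def mod_Suc_eq)
  ultimately show "v \<in> V" using h by (auto simp: PXV_def)
qed

lemma length_PXV: "v \<in> V \<Longrightarrow> length v = s" by (simp add: PXV_iff)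
lemma layer_less: "v \<in> V \<Longrightarrow> layer v < r" by (simp add: PXV_iff)
lemma fst_nth_PXV: "v \<in> V \<Longrightarrow> j < s \<Longrightarrow> fst (v!j) = (layer v + j) mod r" by (simp add: PXV_iff)
lemma snd_nth_PXV: "v \<in> V \<Longrightarrow> j < s \<Longrightarrow> snd (v!j) < 2" by (simp add: PXV_iff)
lemma nth_PXV: "v \<in> V \<Longrightarrow> j < s \<Longrightarrow> v!j = ((layer v + j) mod r, snd (v!j))"
  by (metis fst_nth_PXV prod.collapse)
lemma nth_PXV_in_PXpt: "v \<in> V \<Longrightarrow> j < s \<Longrightarrow> v!j \<in> PXpt r"
  using nth_mem[of j v] by (auto simp: PXV_def)
lemma PXV_not_Nil: "v \<in> V \<Longrightarrow> v \<noteq> []" using length_PXV[of v] s_pos by auto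

lemma PXV_eqI: "v \<in> V \<Longrightarrow> w \<in> V \<Longrightarrow> layer v = layer w \<Longrightarrow> (\<And>j. j < s \<Longrightarrow> snd (v!j) = snd (w!j)) \<Longrightarrow> v = w"
  by (rule nth_equalityI) (auto simp: length_PXV, metis nth_PXV length_PXV)

definition out_nb :: "(nat \<times> nat) list \<Rightarrow> nat \<Rightarrow> (nat \<times> nat) list" where
  "out_nb v c = tl v @ [((layer v + s) mod r, c)]"
definition in_nb :: "(nat \<times> nat) list \<Rightarrow> nat \<Rightarrow> (nat \<times> nat) list" where
  "in_nb v c = ((layer v + r - 1) mod r, c) # butlast v"

lemma length_out_nb: "v \<in> V \<Longrightarrow> length (out_nb v c) = s"
  using length_PXV[of v] PXV_not_Nil[of v] s_pos by (auto simp: out_nb_def)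
lemma nth_out_nb: "v \<in> V \<Longrightarrow> j < s \<Longrightarrow> out_nb v c ! j = (if Suc j < s then v ! Suc j else ((layer v + s) mod r, c))"
  using length_PXV[of v] PXV_not_Nil[of v]
  by (auto simp: out_nb_def nth_append nth_tl)
lemma length_in_nb: "v \<in> V \<Longrightarrow> length (in_nb v c) = s"
  using length_PXV PXV_not_Nil s_pos by (auto simp: in_nb_def)
lemma nth_in_nb: "v \<in> V \<Longrightarrow> j < s \<Longrightarrow> in_nb v c ! j = (if j = 0 then ((layer v + r - 1) mod r, c) else v ! (j - 1))"
  using length_PXV[of v] PXV_not_Nil[of v]
  by (cases j) (auto simp: in_nb_def nth_butlast)

lemma layer_out_nb: "v \<in> V \<Longrightarrow> layer (out_nb v c) = (layer v + 1) mod r"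
proof -
  assume v: "v \<in> V"
  show ?thesis
  proof (cases "1 < s")
    case True
    then show ?thesis using nth_out_nb[OF v, of 0 c] fst_nth_PXV[OF v, of 1] by (simp add: layer_def)
  next
    case False
    then have "s = 1" using s_pos by simp
    then show ?thesis using nth_out_nb[OF v, of 0 c] by (simp add: layer_def)
  qed
qed

lemma layer_in_nb: "v \<in> V \<Longrightarrow> layer (in_nb v c) = (layer v + r - 1) mod r"
  using nth_in_nb[of v 0 c] s_pos by (simp add: layer_def)

lemma out_nb_PXV: "v \<in> V \<Longrightarrow> c < 2 \<Longrightarrow> out_nb v c \<in> V"
proof -
  assume v: "v \<in> V" and c: "c < 2"
  have l: "layer (out_nb v c) = (layer v + 1) mod r" by (rule layer_out_nb[OF v])
  show ?thesis unfolding PXV_iff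
  proof (intro conjI allI impI)
    show "length (out_nb v c) = s" using length_out_nb[OF v] .
    show "layer (out_nb v c) < r" using l r_ge_3 by simp
  next
    fix j assume j: "j < s"
    show "fst (out_nb v c ! j) = (layer (out_nb v c) + j) mod r"
    proof (cases "Suc j < s")
      case True then show ?thesis
        using nth_out_nb[OF v j, of c] fst_nth_PXV[OF v, of "Suc j"] l by (simp add: mod_add_left_eq)
    next
      case False then have "Suc j = s" using j by simp
      then show ?thesis using nth_out_nb[OF v j, of c] l by (simp add: mod_add_left_eq flip: \<open>Suc j = s\<close>)
    qed
    show "snd (out_nb v c ! j) < 2" using nth_out_nb[OF v j, of c] snd_nth_PXV[OF v, of "Suc j"] c by auto
  qed
qed

lemma in_nb_PXV: "v \<in> V \<Longrightarrow> c < 2 \<Longrightarrow> in_nb v c \<in> V"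
proof -
  assume v: "v \<in> V" and c: "c < 2"
  have l: "layer (in_nb v c) = (layer v + r - 1) mod r" by (rule layer_in_nb[OF v])
  show ?thesis unfolding PXV_iff
  proof (intro conjI allI impI)
    show "length (in_nb v c) = s" using length_in_nb[OF v] .
    show "layer (in_nb v c) < r" using l r_ge_3 by simp
  next
    fix j assume j: "j < s"
    show "fst (in_nb v c ! j) = (layer (in_nb v c) + j) mod r"
    proof (cases j)
      case 0 then show ?thesis using nth_in_nb[OF v j, of c] l by simp
    next
      case (Suc i)
      have "fst (in_nb v c ! j) = (layer v + i) mod r" using nth_in_nb[OF v j, of c] fst_nth_PXV[OF v, of i] Suc j by simp
      also have "\<dots> = (layer v + r - 1 + j) mod r" using Suc r_ge_3 
        by (metis add.commute add_Suc_right add_diff_cancel_left' mod_add_self2 add_diff_assoc2 le_add2 plus_1_eq_Suc r_ge_3 Nat.le_trans le_numeral_extra(4) one_le_numeral)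
      also have "\<dots> = (layer (in_nb v c) + j) mod r" using l by (simp add: mod_add_left_eq)
      finally show ?thesis .
    qed
    show "snd (in_nb v c ! j) < 2" using nth_in_nb[OF v j, of c] snd_nth_PXV[OF v, of "j - 1"] c j by auto
  qed
qed

lemma mod_pred_succ: "x < r \<Longrightarrow> ((x + r - 1) mod r + 1) mod r = x"
proof -
  assume x: "x < r"
  have "((x + r - 1) mod r + 1) mod r = (x + r - 1 + 1) mod r" by (simp add: mod_Suc_eq)
  also have "x + r - 1 + 1 = x + r" using r_ge_3 by simp
  finally show ?thesis using x by simp
qed
lemma mod_succ_pred: "x < r \<Longrightarrow> ((x + 1) mod r + r - 1) mod r = x"
proof -
  assume x: "x < r"
  have "(x + 1) mod r + r - 1 = (x + 1) mod r + (r - 1)" using r_ge_3 by simp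
  then have "((x + 1) mod r + r - 1) mod r = (x + 1 + (r - 1)) mod r" by (simp add: mod_add_left_eq)
  also have "x + 1 + (r - 1) = x + r" using r_ge_3 by simp
  finally show ?thesis using x by simp
qed

lemma in_nb_out_nb: "v \<in> V \<Longrightarrow> c < 2 \<Longrightarrow> in_nb (out_nb v c) (snd (v!0)) = v"
proof -
  assume v: "v \<in> V" and c: "c < 2"
  have o: "out_nb v c \<in> V" using out_nb_PXV[OF v c] .
  show ?thesis
  proof (rule PXV_eqI[OF in_nb_PXV[OF o] v])
    show "snd (v ! 0) < 2" using snd_nth_PXV[OF v, of 0] s_pos by simp
    show "layer (in_nb (out_nb v c) (snd (v ! 0))) = layer v"
      using layer_in_nb[OF o] layer_out_nb[OF v] mod_succ_pred[OF layer_less[OF v]] by simp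
  next
    fix j assume j: "j < s"
    show "snd (in_nb (out_nb v c) (snd (v ! 0)) ! j) = snd (v ! j)"
      using nth_in_nb[OF o j] nth_out_nb[OF v, of "j - 1" c] j by (cases j) auto
  qed
qed

lemma out_nb_in_nb: "v \<in> V \<Longrightarrow> c < 2 \<Longrightarrow> out_nb (in_nb v c) (snd (v!(s-1))) = v"
proof -
  assume v: "v \<in> V" and c: "c < 2"
  have o: "in_nb v c \<in> V" using in_nb_PXV[OF v c] .
  show ?thesis
  proof (rule PXV_eqI[OF out_nb_PXV[OF o] v])
    show "snd (v ! (s-1)) < 2" using snd_nth_PXV[OF v, of "s-1"] s_pos by simp
    show "layer (out_nb (in_nb v c) (snd (v ! (s-1)))) = layer v"
      using layer_in_nb[OF v] layer_out_nb[OF o] mod_pred_succ[OF layer_less[OF v]] by simp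
  next
    fix j assume j: "j < s"
    show "snd (out_nb (in_nb v c) (snd (v ! (s-1))) ! j) = snd (v ! j)"
    proof (cases "Suc j < s")
      case True then show ?thesis using nth_in_nb[OF v, of "Suc j" c] nth_out_nb[OF o j] j by auto
    next
      case False then have "j = s - 1" using j by simp
      then show ?thesis using nth_out_nb[OF o j] j by auto
    qed
  qed
qed

lemma PXarc_iff_out_nb: "PXarc r s v w \<longleftrightarrow> v \<in> V \<and> (\<exists>c<2. w = out_nb v c)"
proof
  assume a: "PXarc r s v w"
  then have v: "v \<in> V" and w: "w \<in> V" and t: "tl v = butlast w" and l: "PXarc1 r (last v) (last w)"
    by (auto simp: PXarc_def)
  have lv: "last v = v ! (s - 1)" using length_PXV[OF v] PXV_not_Nil[OF v] by (simp add: last_conv_nth)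
  have flv: "fst (last v) = (layer v + (s - 1)) mod r" using lv fst_nth_PXV[OF v, of "s-1"] s_pos by simp
  have "fst (last w) = (fst (last v) + 1) mod r" using l by (simp add: PXarc1_def)
  also have "\<dots> = (layer v + (s - 1) + 1) mod r" using flv by (simp add: mod_Suc_eq)
  also have "\<dots> = (layer v + s) mod r" using s_pos by simp
  finally have flw: "fst (last w) = (layer v + s) mod r" .
  have lw: "last w = w ! (s - 1)" using length_PXV[OF w] PXV_not_Nil[OF w] by (simp add: last_conv_nth)
  have c: "snd (last w) < 2" using lw snd_nth_PXV[OF w, of "s-1"] s_pos by simp
  have "w = butlast w @ [last w]" using PXV_not_Nil[OF w] by simp
  also have "\<dots> = out_nb v (snd (last w))" using t flw by (simp add: out_nb_def prod_eq_iff)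
  finally show "v \<in> V \<and> (\<exists>c<2. w = out_nb v c)" using v c by blast
next
  assume "v \<in> V \<and> (\<exists>c<2. w = out_nb v c)"
  then obtain c where v: "v \<in> V" and c: "c < 2" and w: "w = out_nb v c" by blast
  have lv: "last v = v ! (s - 1)" using length_PXV[OF v] PXV_not_Nil[OF v] by (simp add: last_conv_nth)
  have flv: "fst (last v) = (layer v + (s - 1)) mod r" using lv fst_nth_PXV[OF v, of "s-1"] s_pos by simp
  have p1: "last v \<in> PXpt r" using lv nth_PXV_in_PXpt[OF v, of "s-1"] s_pos by simp
  have p2: "((layer v + s) mod r, c) \<in> PXpt r" using c r_ge_3 by (simp add: PXpt_def)
  have e: "(layer v + s) mod r = (fst (last v) + 1) mod r" using flv s_pos by (simp add: mod_Suc_eq)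
  show "PXarc r s v w" unfolding PXarc_def using v out_nb_PXV[OF v c] w p1 p2 e
    by (auto simp: out_nb_def PXarc1_def)
qed

lemma PXarc_iff_in_nb: "PXarc r s w v \<longleftrightarrow> v \<in> V \<and> (\<exists>c<2. w = in_nb v c)"
proof
  assume "PXarc r s w v"
  then obtain c where w: "w \<in> V" and c: "c < 2" and v: "v = out_nb w c" by (auto simp: PXarc_iff_out_nb)
  have "in_nb v (snd (w!0)) = w" using in_nb_out_nb[OF w c] v by simp
  moreover have "snd (w!0) < 2" using snd_nth_PXV[OF w, of 0] s_pos by simp
  ultimately show "v \<in> V \<and> (\<exists>c<2. w = in_nb v c)" using out_nb_PXV[OF w c] v by metis
next
  assume "v \<in> V \<and> (\<exists>c<2. w = in_nb v c)"
  then obtain c where v: "v \<in> V" and c: "c < 2" and w: "w = in_nb v c" by blast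
  have "out_nb w (snd (v!(s-1))) = v" using out_nb_in_nb[OF v c] w by simp
  moreover have "snd (v!(s-1)) < 2" using snd_nth_PXV[OF v, of "s-1"] s_pos by simp
  ultimately show "PXarc r s w v" using in_nb_PXV[OF v c] w unfolding PXarc_iff_out_nb by metis
qed

lemma PXarc_PXV1: "PXarc r s v w \<Longrightarrow> v \<in> V" by (simp add: PXarc_def)
lemma PXarc_PXV2: "PXarc r s v w \<Longrightarrow> w \<in> V" by (simp add: PXarc_def)

lemma layer_PXarc: "PXarc r s v w \<Longrightarrow> layer w = (layer v + 1) mod r"
  using layer_out_nb by (auto simp: PXarc_iff_out_nb)

lemma PXarc_asym: "PXarc r s v w \<Longrightarrow> PXarc r s w v \<Longrightarrow> False"
proof -
  assume a: "PXarc r s v w" and b: "PXarc r s w v"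
  have "layer v = ((layer v + 1) mod r + 1) mod r" using layer_PXarc[OF a] layer_PXarc[OF b] by simp
  also have "\<dots> = (layer v + 2) mod r" by (simp add: mod_Suc_eq)
  finally have "(layer v + 2) mod r = layer v" by (rule sym)
  then have "2 mod r = 0" using add_mod_eq_self_iff[OF layer_less[OF PXarc_PXV1[OF a]], of 2] by blast
  then show False using r_ge_3 by simp
qed

lemma PXarc_neq: "PXarc r s v w \<Longrightarrow> v \<noteq> w"
proof
  assume a: "PXarc r s v w" and e: "v = w"
  have "(layer v + 1) mod r = layer v" using layer_PXarc[OF a] e by simp
  then have "1 mod r = 0" using add_mod_eq_self_iff[OF layer_less[OF PXarc_PXV1[OF a]], of 1] by blast
  then show False using r_ge_3 by simp
qed

lemma PXadj_iff: "PXadj r s a b \<longleftrightarrow> PXarc r s a b \<or> PXarc r s b a"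
  using PXarc_neq unfolding PXadj_def by blast

definition nbs :: "(nat \<times> nat) list \<Rightarrow> (nat \<times> nat) list set" where
  "nbs v = {w. PXadj r s v w}"
definition out_nbs where "out_nbs v = {out_nb v 0, out_nb v 1}"
definition in_nbs where "in_nbs v = {in_nb v 0, in_nb v 1}"

lemma nbs_eq: "v \<in> V \<Longrightarrow> nbs v = out_nbs v \<union> in_nbs v"
proof -
  assume v: "v \<in> V"
  have "w \<in> nbs v \<longleftrightarrow> w \<in> out_nbs v \<union> in_nbs v" for w
  proof -
    have "w \<in> nbs v \<longleftrightarrow> (\<exists>c<2. w = out_nb v c) \<or> (\<exists>c<2. w = in_nb v c)"
      unfolding nbs_def mem_Collect_eq PXadj_iff PXarc_iff_out_nb[of v w] PXarc_iff_in_nb[of w v] using v by simp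
    also have "\<dots> \<longleftrightarrow> w \<in> out_nbs v \<union> in_nbs v"
      unfolding out_nbs_def in_nbs_def by (auto simp: less_2_cases_iff)
    finally show ?thesis .
  qed
  then show ?thesis by blast
qed

lemma layer_in_nb': "v \<in> V \<Longrightarrow> layer (in_nb v c) = (layer v + (r - 1)) mod r"
  using layer_in_nb[of v c] r_ge_3 by simp

lemma out_nb_inj: "v \<in> V \<Longrightarrow> out_nb v c = out_nb v d \<Longrightarrow> c = d"
  by (simp add: out_nb_def)
lemma in_nb_inj: "in_nb v c = in_nb v d \<Longrightarrow> c = d"
  by (simp add: in_nb_def)
lemma out_nb_neq: "v \<in> V \<Longrightarrow> out_nb v 0 \<noteq> out_nb v 1" using out_nb_inj by fastforce
lemma in_nb_neq: "in_nb v 0 \<noteq> in_nb v 1" using in_nb_inj by fastforce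

lemma out_nb_neq_in_nb: "v \<in> V \<Longrightarrow> out_nb v c \<noteq> in_nb v d"
proof
  assume v: "v \<in> V" and e: "out_nb v c = in_nb v d"
  have "(layer v + 1) mod r = (layer v + (r - 1)) mod r" using e layer_out_nb[OF v, of c] layer_in_nb'[OF v, of d] by simp
  then have "1 mod r = (r - 1) mod r" using mod_add_left_cancel_nat by blast
  then show False using r_ge_3 by simp
qed

lemma out_in_nbs_disjoint: "v \<in> V \<Longrightarrow> out_nbs v \<inter> in_nbs v = {}"
  using out_nb_neq_in_nb unfolding out_nbs_def in_nbs_def by blast

lemma card_out_nbs: "v \<in> V \<Longrightarrow> card (out_nbs v) = 2" using out_nb_neq by (simp add: out_nbs_def)
lemma card_in_nbs: "card (in_nbs v) = 2" using in_nb_neq by (simp add: in_nbs_def)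
lemma finite_nbs: "v \<in> V \<Longrightarrow> finite (nbs v)" by (simp add: nbs_eq out_nbs_def in_nbs_def)
lemma card_nbs: "v \<in> V \<Longrightarrow> card (nbs v) = 4"
  using card_Un_disjoint[of "out_nbs v" "in_nbs v"] card_out_nbs card_in_nbs out_in_nbs_disjoint
  by (simp add: nbs_eq out_nbs_def in_nbs_def)

lemma out_nbs_PXV: "v \<in> V \<Longrightarrow> out_nbs v \<subseteq> V" using out_nb_PXV by (simp add: out_nbs_def)
lemma in_nbs_PXV: "v \<in> V \<Longrightarrow> in_nbs v \<subseteq> V" using in_nb_PXV by (simp add: in_nbs_def)
lemma nbs_PXV: "v \<in> V \<Longrightarrow> nbs v \<subseteq> V" using out_nbs_PXV in_nbs_PXV nbs_eq by blast

lemma in_nb_out_nb_eq: "v \<in> V \<Longrightarrow> in_nb (out_nb v c) b = (layer v, b) # tl v"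
  using mod_succ_pred[OF layer_less] layer_out_nb[of v c] by (simp add: in_nb_def out_nb_def)
lemma in_nbs_out_nb: "v \<in> V \<Longrightarrow> in_nbs (out_nb v c) = {(layer v, 0) # tl v, (layer v, 1) # tl v}"
  using in_nb_out_nb_eq by (simp add: in_nbs_def)
lemma out_nb_in_nb_eq: "v \<in> V \<Longrightarrow> out_nb (in_nb v c) d = butlast v @ [((layer v + (r - 1) + s) mod r, d)]"
  using layer_in_nb'[of v c] by (simp add: in_nb_def out_nb_def mod_add_left_eq)
lemma out_nbs_in_nb: "v \<in> V \<Longrightarrow> out_nbs (in_nb v c) = {butlast v @ [((layer v + (r - 1) + s) mod r, 0)], butlast v @ [((layer v + (r - 1) + s) mod r, 1)]}"
  using out_nb_in_nb_eq by (simp add: out_nbs_def)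

lemma out_nbs_eq_if_s1: "s = 1 \<Longrightarrow> u \<in> V \<Longrightarrow> w \<in> V \<Longrightarrow> layer u = layer w \<Longrightarrow> out_nbs u = out_nbs w"
proof -
  assume "s = 1" "u \<in> V" "w \<in> V" "layer u = layer w"
  moreover from this have "tl u = []" "tl w = []" using length_PXV[of u] length_PXV[of w] by (auto simp: length_Suc_conv)
  ultimately show ?thesis unfolding out_nbs_def out_nb_def by simp
qed
lemma in_nbs_eq_if_s1: "s = 1 \<Longrightarrow> u \<in> V \<Longrightarrow> w \<in> V \<Longrightarrow> layer u = layer w \<Longrightarrow> in_nbs u = in_nbs w"
proof -
  assume "s = 1" "u \<in> V" "w \<in> V" "layer u = layer w"
  moreover from this have "butlast u = []" "butlast w = []" using length_PXV[of u] length_PXV[of w] by (auto simp: length_Suc_conv)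
  ultimately show ?thesis unfolding in_nbs_def in_nb_def by simp
qed

definition twin_threshold :: nat where "twin_threshold = (if s = 1 then 3 else 2)"

lemma card_in_out_nbs: "w \<in> V \<Longrightarrow> card (in_nbs w \<union> out_nbs w) = 4"
  using card_nbs[of w] nbs_eq[of w] by (simp add: Un_commute)

lemma twin_threshold_out_nbs: "v \<in> V \<Longrightarrow> twin_threshold \<le> card (nbs (out_nb v 0) \<inter> nbs (out_nb v 1))"
proof -
  assume v: "v \<in> V"
  have u0: "out_nb v 0 \<in> V" and u1: "out_nb v 1 \<in> V" using out_nb_PXV[OF v] by auto
  have fin: "finite (nbs (out_nb v 0) \<inter> nbs (out_nb v 1))" using finite_nbs[OF u0] by simp
  have ii: "in_nbs (out_nb v 0) = in_nbs (out_nb v 1)" using in_nbs_out_nb[OF v] by simp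
  show ?thesis
  proof (cases "s = 1")
    case True
    have "out_nbs (out_nb v 0) = out_nbs (out_nb v 1)"
      using out_nbs_eq_if_s1[OF True u0 u1] layer_out_nb[OF v] by simp
    then have "in_nbs (out_nb v 0) \<union> out_nbs (out_nb v 0) \<subseteq> nbs (out_nb v 0) \<inter> nbs (out_nb v 1)"
      using ii nbs_eq[OF u0] nbs_eq[OF u1] by blast
    then have "4 \<le> card (nbs (out_nb v 0) \<inter> nbs (out_nb v 1))"
      using card_mono[OF fin] card_in_out_nbs[OF u0] by metis
    then show ?thesis unfolding twin_threshold_def using True by simp
  next
    case False
    have "in_nbs (out_nb v 0) \<subseteq> nbs (out_nb v 0) \<inter> nbs (out_nb v 1)"
      using ii nbs_eq[OF u0] nbs_eq[OF u1] by blast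
    then have "2 \<le> card (nbs (out_nb v 0) \<inter> nbs (out_nb v 1))"
      using card_mono[OF fin] card_in_nbs by metis
    then show ?thesis unfolding twin_threshold_def using False by simp
  qed
qed

lemma twin_threshold_in_nbs: "v \<in> V \<Longrightarrow> twin_threshold \<le> card (nbs (in_nb v 0) \<inter> nbs (in_nb v 1))"
proof -
  assume v: "v \<in> V"
  have u0: "in_nb v 0 \<in> V" and u1: "in_nb v 1 \<in> V" using in_nb_PXV[OF v] by auto
  have fin: "finite (nbs (in_nb v 0) \<inter> nbs (in_nb v 1))" using finite_nbs[OF u0] by simp
  have ii: "out_nbs (in_nb v 0) = out_nbs (in_nb v 1)" using out_nbs_in_nb[OF v] by simp
  show ?thesis
  proof (cases "s = 1")
    case True
    have "in_nbs (in_nb v 0) = in_nbs (in_nb v 1)"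
      using in_nbs_eq_if_s1[OF True u0 u1] layer_in_nb[OF v] by simp
    then have "in_nbs (in_nb v 0) \<union> out_nbs (in_nb v 0) \<subseteq> nbs (in_nb v 0) \<inter> nbs (in_nb v 1)"
      using ii nbs_eq[OF u0] nbs_eq[OF u1] by blast
    then have "4 \<le> card (nbs (in_nb v 0) \<inter> nbs (in_nb v 1))"
      using card_mono[OF fin] card_in_out_nbs[OF u0] by metis
    then show ?thesis unfolding twin_threshold_def using True by simp
  next
    case False
    have "out_nbs (in_nb v 0) \<subseteq> nbs (in_nb v 0) \<inter> nbs (in_nb v 1)"
      using ii nbs_eq[OF u0] nbs_eq[OF u1] by blast
    then have "2 \<le> card (nbs (in_nb v 0) \<inter> nbs (in_nb v 1))"
      using card_mono[OF fin] card_out_nbs[OF u0] by metis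
    then show ?thesis unfolding twin_threshold_def using False by simp
  qed
qed

lemma mod_double_pred: "(r - 1 + (r - 1)) mod r = r - 2"
proof -
  have e: "r - 1 + (r - 1) = (r - 2) + r" using r_ge_3 by simp
  show ?thesis unfolding e mod_add_self2 using r_ge_3 by simp
qed

lemma layer_neq_plus_2: "x < r \<Longrightarrow> x \<noteq> (x + 2) mod r"
  using add_mod_eq_self_iff[of x r 2] r_ge_3 by auto
lemma layer_neq_minus_2: "x < r \<Longrightarrow> (x + (r - 1) + (r - 1)) mod r \<noteq> x"
  using add_mod_eq_self_iff[of x r "r - 1 + (r - 1)"] mod_double_pred r_ge_3 by (simp add: add.assoc)
lemma layer_minus_2_neq_plus_2: "r \<noteq> 4 \<Longrightarrow> (x + (r - 1) + (r - 1)) mod r \<noteq> (x + 2) mod r"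
  using mod_add_left_cancel_nat[of x "r - 1 + (r - 1)" r 2] mod_double_pred r_ge_3 by (simp add: add.assoc)

lemma common_nbs_in_nb_out_nb:
  assumes r4: "r \<noteq> 4" and v: "v \<in> V" and c: "c < 2" "c' < 2"
    and z: "z \<in> nbs (in_nb v c) \<inter> nbs (out_nb v c')"
  shows "z \<in> out_nbs (in_nb v c) \<inter> in_nbs (out_nb v c')"
proof -
  define x y u where "x = layer v" and "y = in_nb v c" and "u = out_nb v c'"
  have x: "x < r" using layer_less[OF v] x_def by simp
  have yV: "y \<in> V" and uV: "u \<in> V" using in_nb_PXV[OF v c(1)] out_nb_PXV[OF v c(2)] y_def u_def by auto
  have ly: "layer y = (x + (r - 1)) mod r" using layer_in_nb'[OF v] x_def y_def by simp
  have lu: "layer u = (x + 1) mod r" using layer_out_nb[OF v] x_def u_def by simp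
  have loy: "layer z = x" if zo: "z \<in> out_nbs y"
  proof -
    obtain d where "z = out_nb y d" using zo unfolding out_nbs_def by blast
    then have "layer z = ((x + (r - 1)) mod r + 1) mod r" using layer_out_nb[OF yV] ly by simp
    also have "\<dots> = (x + r) mod r" using r_ge_3 by (simp add: mod_Suc_eq)
    finally show ?thesis using x by simp
  qed
  have liy: "layer z = (x + (r - 1) + (r - 1)) mod r" if zi: "z \<in> in_nbs y"
  proof -
    obtain d where "z = in_nb y d" using zi unfolding in_nbs_def by blast
    then show ?thesis using layer_in_nb'[OF yV] ly by (simp add: mod_add_left_eq)
  qed
  have lou: "layer z = (x + 2) mod r" if zo: "z \<in> out_nbs u"
  proof -
    obtain d where "z = out_nb u d" using zo unfolding out_nbs_def by blast
    then show ?thesis using layer_out_nb[OF uV] lu by (simp add: mod_Suc_eq)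
  qed
  have liu: "layer z = x" if zi: "z \<in> in_nbs u"
  proof -
    obtain d where "z = in_nb u d" using zi unfolding in_nbs_def by blast
    then show ?thesis using layer_in_nb[OF uV] lu mod_succ_pred[OF x] by simp
  qed
  have "z \<in> nbs y \<inter> nbs u" using z unfolding y_def u_def .
  then have "z \<in> out_nbs y \<or> z \<in> in_nbs y" "z \<in> out_nbs u \<or> z \<in> in_nbs u"
    using nbs_eq[OF yV] nbs_eq[OF uV] by auto
  then have "z \<in> out_nbs y \<and> z \<in> in_nbs u"
    using loy liy lou liu layer_neq_plus_2[OF x] layer_neq_minus_2[OF x] layer_minus_2_neq_plus_2[OF r4, of x]
    by metis
  then show ?thesis unfolding y_def u_def by simp
qed

lemma out_nbs_in_nb_inter_in_nbs_out_nb: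
  assumes v: "v \<in> V" and c: "c < 2" "c' < 2"
  shows "out_nbs (in_nb v c) \<inter> in_nbs (out_nb v c') \<subseteq> (if s = 1 then {[(layer v, 0)], [(layer v, 1)]} else {v})"
proof
  fix z assume z: "z \<in> out_nbs (in_nb v c) \<inter> in_nbs (out_nb v c')"
  then obtain d where d: "z = out_nb (in_nb v c) d" unfolding out_nbs_def by blast
  have "\<exists>e<2. z = in_nb (out_nb v c') e" using z unfolding in_nbs_def by force
  then obtain e where e: "e < 2" "z = in_nb (out_nb v c') e" by blast
  have z1: "z = butlast v @ [((layer v + (r - 1) + s) mod r, d)]" using d out_nb_in_nb_eq[OF v] by simp
  have z2: "z = (layer v, e) # tl v" using e in_nb_out_nb_eq[OF v] by simp
  have lv: "length v = s" using length_PXV[OF v] .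
  show "z \<in> (if s = 1 then {[(layer v, 0)], [(layer v, 1)]} else {v})"
  proof (cases "s = 1")
    case True
    then have "tl v = []" using lv by (cases v) auto
    then show ?thesis using z2 e True by (auto simp: less_2_cases_iff)
  next
    case False
    have "z = v"
    proof (rule nth_equalityI)
      show "length z = length v" using z2 lv PXV_not_Nil[OF v] s_pos by simp
    next
      fix j assume "j < length z"
      then have j: "j < s" using z2 lv PXV_not_Nil[OF v] s_pos by simp
      show "z ! j = v ! j"
      proof (cases j)
        case 0 then show ?thesis using z1 False lv s_pos by (simp add: nth_append nth_butlast)
      next
        case (Suc i) then show ?thesis using z2 lv j by (simp add: nth_tl)
      qed
    qed
    then show ?thesis using False by simp
  qed
qed

lemma card_common_nbs_in_out_less:
  assumes r4: "r \<noteq> 4" and v: "v \<in> V" and y: "y \<in> in_nbs v" and u: "u \<in> out_nbs v"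
  shows "card (nbs y \<inter> nbs u) < twin_threshold"
proof -
  have "\<exists>c<2. y = in_nb v c" "\<exists>c'<2. u = out_nb v c'"
    using y u unfolding in_nbs_def out_nbs_def by force+
  then obtain c c' where c: "c < 2" "c' < 2" and yu: "y = in_nb v c" "u = out_nb v c'" by blast
  have sub: "nbs y \<inter> nbs u \<subseteq> (if s = 1 then {[(layer v, 0)], [(layer v, 1::nat)]} else {v})"
    using common_nbs_in_nb_out_nb[OF r4 v c] out_nbs_in_nb_inter_in_nbs_out_nb[OF v c] yu by blast
  show ?thesis
  proof (cases "s = 1")
    case True
    then have "card (nbs y \<inter> nbs u) \<le> card {[(layer v, 0)], [(layer v, 1::nat)]}"
      using sub by (intro card_mono) auto
    also have "\<dots> \<le> 2" by (simp add: card_insert_le_m1)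
    finally show ?thesis unfolding twin_threshold_def using True by simp
  next
    case False
    then have "card (nbs y \<inter> nbs u) \<le> card {v}" using sub by (intro card_mono) auto
    then show ?thesis unfolding twin_threshold_def using False by simp
  qed
qed

lemma PXarc_reach_shift: "k \<le> s \<Longrightarrow> v \<in> V \<Longrightarrow> w \<in> V \<Longrightarrow> layer w = (layer v + s) mod r \<Longrightarrow>
   drop k v @ take k w \<in> V \<and> (PXarc r s)\<^sup>*\<^sup>* v (drop k v @ take k w)"
proof (induction k)
  case 0 then show ?case by simp
next
  case (Suc k)
  let ?h = "drop k v @ take k w"
  have hV: "?h \<in> V" and hr: "(PXarc r s)\<^sup>*\<^sup>* v ?h" using Suc by auto
  have k: "k < s" using Suc by simp
  have lv: "length v = s" "length w = s" using length_PXV Suc by auto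
  have lh: "layer ?h = (layer v + k) mod r" using fst_nth_PXV[OF \<open>v \<in> V\<close> k] k lv
    by (simp add: layer_def nth_append)
  have wk: "w ! k = ((layer w + k) mod r, snd (w!k))" using nth_PXV[OF \<open>w \<in> V\<close> k] .
  have "(layer ?h + s) mod r = (layer v + k + s) mod r" using lh by (simp add: mod_add_left_eq)
  also have "\<dots> = (layer v + s + k) mod r" by (simp add: ac_simps)
  also have "\<dots> = (layer w + k) mod r" using Suc.prems(4) by (simp add: mod_add_left_eq)
  finally have e: "(layer ?h + s) mod r = (layer w + k) mod r" .
  have tlh: "tl ?h = drop (Suc k) v @ take k w" using k lv by (simp add: drop_Suc tl_drop)
  have o: "out_nb ?h (snd (w!k)) = drop (Suc k) v @ take (Suc k) w"
    unfolding out_nb_def tlh using e wk k lv by (simp add: take_Suc_conv_app_nth)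
  have c: "snd (w!k) < 2" using snd_nth_PXV[OF \<open>w \<in> V\<close> k] .
  have a: "PXarc r s ?h (out_nb ?h (snd (w!k)))" using hV c by (auto simp: PXarc_iff_out_nb)
  show ?case using out_nb_PXV[OF hV c] a hr o by (metis rtranclp.rtrancl_into_rtrancl)
qed

lemma PXarc_reach_layer: "v \<in> V \<Longrightarrow> \<exists>u\<in>V. (PXarc r s)\<^sup>*\<^sup>* v u \<and> layer u = (layer v + m) mod r"
proof (induction m)
  case 0 then show ?case using layer_less by auto
next
  case (Suc m)
  then obtain u where u: "u \<in> V" "(PXarc r s)\<^sup>*\<^sup>* v u" "layer u = (layer v + m) mod r" by blast
  have a: "PXarc r s u (out_nb u 0)" unfolding PXarc_iff_out_nb using u(1) by (intro conjI exI[where x=0]) auto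
  have "layer (out_nb u 0) = (layer v + Suc m) mod r" using layer_out_nb[OF u(1)] u(3) by (simp add: mod_Suc_eq)
  then show ?case using out_nb_PXV[OF u(1)] a u(2) by (metis rtranclp.rtrancl_into_rtrancl zero_less_numeral)
qed

lemma PXarc_connected: "v \<in> V \<Longrightarrow> w \<in> V \<Longrightarrow> (PXarc r s)\<^sup>*\<^sup>* v w"
proof -
  assume v: "v \<in> V" and w: "w \<in> V"
  define a where "a = layer v + s"
  define m where "m = r - a mod r + layer w"
  have lt: "a mod r < r" using r_ge_3 by simp
  have am: "a + m = a div r * r + r + layer w"
    using div_mult_mod_eq[of a r] lt unfolding m_def by linarith
  obtain u where u: "u \<in> V" "(PXarc r s)\<^sup>*\<^sup>* v u" "layer u = (layer v + m) mod r"
    using PXarc_reach_layer[OF v] by blast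
  have "(layer u + s) mod r = (layer v + m + s) mod r" using u(3) by (simp add: mod_add_left_eq)
  also have "\<dots> = (a + m) mod r" unfolding a_def by (simp add: ac_simps)
  finally have "(layer u + s) mod r = (a + m) mod r" .
  also have "\<dots> = layer w"
  proof -
    have "a + m = layer w + (a div r + 1) * r" unfolding am by (simp add: algebra_simps)
    then show ?thesis using layer_less[OF w] by (simp only: mod_mult_self1) simp
  qed
  finally have l: "layer w = (layer u + s) mod r" by simp
  have "drop s u @ take s w = w" using length_PXV[OF u(1)] length_PXV[OF w] by simp
  then have "(PXarc r s)\<^sup>*\<^sup>* u w" using PXarc_reach_shift[OF _ u(1) w l, of s] by simp
  then show ?thesis using u(2) by simp
qed

lemma PXarc_invariant_const: "(\<And>a b. PXarc r s a b \<Longrightarrow> P a = P b) \<Longrightarrow> v \<in> V \<Longrightarrow> w \<in> V \<Longrightarrow> P v = P w"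
proof -
  assume h: "\<And>a b. PXarc r s a b \<Longrightarrow> P a = P b" and v: "v \<in> V" and w: "w \<in> V"
  have "(PXarc r s)\<^sup>*\<^sup>* v w" using PXarc_connected[OF v w] .
  then show ?thesis by (induction rule: rtranclp_induct) (auto dest: h)
qed

definition bits_vertex :: "nat \<Rightarrow> nat list \<Rightarrow> (nat \<times> nat) list" where
  "bits_vertex y bs = map (\<lambda>j. ((y + j) mod r, bs ! j)) [0..<s]"

definition bit_lists :: "nat list set" where "bit_lists = {bs. set bs \<subseteq> {0,1} \<and> length bs = s}"

definition layer_vertices :: "nat \<Rightarrow> (nat \<times> nat) list set" where "layer_vertices y = {a \<in> V. layer a = y}"

lemma card_bit_lists: "card bit_lists = 2 ^ s"
  unfolding bit_lists_def using card_lists_length_eq[of "{0::nat,1}" s] by (simp add: numeral_2_eq_2)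

lemma finite_bit_lists: "finite bit_lists"
  using card_bit_lists card_eq_0_iff by (metis power_not_zero zero_neq_numeral)

lemma bits_vertex_PXV: "y < r \<Longrightarrow> bs \<in> bit_lists \<Longrightarrow> bits_vertex y bs \<in> V \<and> layer (bits_vertex y bs) = y"
proof -
  assume y: "y < r" and bs: "bs \<in> bit_lists"
  have l: "layer (bits_vertex y bs) = y" using s_pos y by (simp add: bits_vertex_def layer_def)
  have "bits_vertex y bs \<in> V" unfolding PXV_iff
  proof (intro conjI allI impI)
    show "length (bits_vertex y bs) = s" by (simp add: bits_vertex_def)
    show "layer (bits_vertex y bs) < r" using l y by simp
  next
    fix j assume j: "j < s"
    show "fst (bits_vertex y bs ! j) = (layer (bits_vertex y bs) + j) mod r" using l j by (simp add: bits_vertex_def)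
    have "bs ! j \<in> set bs" using bs j unfolding bit_lists_def by simp
    then have "bs ! j \<in> {0,1}" using bs unfolding bit_lists_def by blast
    then show "snd (bits_vertex y bs ! j) < 2" using j by (auto simp: bits_vertex_def)
  qed
  then show ?thesis using l by simp
qed

lemma layer_vertices_eq: "y < r \<Longrightarrow> layer_vertices y = bits_vertex y ` bit_lists"
proof
  assume y: "y < r"
  show "bits_vertex y ` bit_lists \<subseteq> layer_vertices y" using bits_vertex_PXV[OF y] by (auto simp: layer_vertices_def)
  show "layer_vertices y \<subseteq> bits_vertex y ` bit_lists"
  proof
    fix a assume "a \<in> layer_vertices y"
    then have a: "a \<in> V" and la: "layer a = y" by (auto simp: layer_vertices_def)
    have "map snd a \<in> bit_lists" unfolding bit_lists_def
    proof (intro CollectI conjI)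
      show "length (map snd a) = s" using length_PXV[OF a] by simp
      show "set (map snd a) \<subseteq> {0,1}"
      proof
        fix b assume "b \<in> set (map snd a)"
        then obtain j where "j < s" "b = snd (a!j)" using length_PXV[OF a] by (auto simp: in_set_conv_nth)
        then show "b \<in> {0,1}" using snd_nth_PXV[OF a] by fastforce
      qed
    qed
    moreover have "a = bits_vertex y (map snd a)"
    proof (rule nth_equalityI)
      show "length a = length (bits_vertex y (map snd a))" using length_PXV[OF a] by (simp add: bits_vertex_def)
      fix j assume "j < length a"
      then have j: "j < s" using length_PXV[OF a] by simp
      show "a ! j = bits_vertex y (map snd a) ! j"
        using nth_PXV[OF a j] la j length_PXV[OF a] by (simp add: bits_vertex_def)
    qed
    ultimately show "a \<in> bits_vertex y ` bit_lists" by blast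
  qed
qed

lemma inj_on_bits_vertex: "inj_on (bits_vertex y) bit_lists"
proof (rule inj_onI)
  fix a b assume "a \<in> bit_lists" "b \<in> bit_lists" "bits_vertex y a = bits_vertex y b"
  then have "map snd (bits_vertex y a) = map snd (bits_vertex y b)" by simp
  moreover have "map snd (bits_vertex y bs) = bs" if "bs \<in> bit_lists" for bs
    using that by (auto simp: bits_vertex_def bit_lists_def intro: nth_equalityI)
  ultimately show "a = b" using \<open>a \<in> bit_lists\<close> \<open>b \<in> bit_lists\<close> by simp
qed

lemma card_layer_vertices: "y < r \<Longrightarrow> card (layer_vertices y) = 2 ^ s"
  using layer_vertices_eq card_image[OF inj_on_bits_vertex] card_bit_lists by simp

lemma finite_layer_vertices: "y < r \<Longrightarrow> finite (layer_vertices y)"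
  using layer_vertices_eq finite_bit_lists by simp

lemma card_vertices_in_layers: "G \<subseteq> {..<r} \<Longrightarrow> card {a \<in> V. layer a \<in> G} = card G * 2 ^ s"
proof -
  assume G: "G \<subseteq> {..<r}"
  have fG: "finite G" using G finite_subset by blast
  have eq: "{a \<in> V. layer a \<in> G} = (\<Union>y\<in>G. layer_vertices y)" by (auto simp: layer_vertices_def)
  have "card (\<Union>y\<in>G. layer_vertices y) = (\<Sum>y\<in>G. card (layer_vertices y))"
    using fG G finite_layer_vertices by (intro card_UN_disjoint) (auto simp: layer_vertices_def)
  also have "\<dots> = (\<Sum>y\<in>G. 2 ^ s)" using G card_layer_vertices by (intro sum.cong) auto
  finally show ?thesis using eq by simp
qed

lemma card_PXV: "card V = r * 2 ^ s"
proof -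
  have "{a \<in> V. layer a \<in> {..<r}} = V" using layer_less by auto
  then show ?thesis using card_vertices_in_layers[of "{..<r}"] by simp
qed

lemma finite_PXV: "finite V"
  using card_PXV r_ge_3 card_eq_0_iff by fastforce

lemma PXE_eq_arc_image: "PXE r s = (\<lambda>(a,c). {a, out_nb a c}) ` (V \<times> {0,1})"
proof
  show "PXE r s \<subseteq> (\<lambda>(a,c). {a, out_nb a c}) ` (V \<times> {0,1})"
  proof
    fix e assume "e \<in> PXE r s"
    then obtain a b where e: "e = {a,b}" and ab: "PXarc r s a b \<or> PXarc r s b a"
      by (auto simp: PXE_def PXadj_iff)
    from ab show "e \<in> (\<lambda>(a,c). {a, out_nb a c}) ` (V \<times> {0,1})"
    proof
      assume "PXarc r s a b"
      then obtain c where c: "a \<in> V" "c < 2" "b = out_nb a c" unfolding PXarc_iff_out_nb by blast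
      then have "(a,c) \<in> V \<times> {0,1}" by auto
      then show ?thesis using e c by (intro rev_image_eqI[of "(a,c)"]) auto
    next
      assume "PXarc r s b a"
      then obtain c where c: "b \<in> V" "c < 2" "a = out_nb b c" unfolding PXarc_iff_out_nb by blast
      then have "(b,c) \<in> V \<times> {0,1}" by auto
      then show ?thesis using e c by (intro rev_image_eqI[of "(b,c)"]) auto
    qed
  qed
  show "(\<lambda>(a,c). {a, out_nb a c}) ` (V \<times> {0,1}) \<subseteq> PXE r s"
  proof
    fix e assume "e \<in> (\<lambda>(a,c). {a, out_nb a c}) ` (V \<times> {0,1})"
    then obtain a c where "a \<in> V" "c \<in> {0,1}" "e = {a, out_nb a c}" by auto
    then have "PXarc r s a (out_nb a c)" unfolding PXarc_iff_out_nb by (intro conjI exI[where x=c]) auto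
    then have "PXadj r s a (out_nb a c)" by (simp add: PXadj_iff)
    then show "e \<in> PXE r s" unfolding PXE_def using \<open>e = {a, out_nb a c}\<close> by blast
  qed
qed

lemma inj_on_arc_edge: "inj_on (\<lambda>(a,c). {a, out_nb a c}) (V \<times> {0,1})"
proof (rule inj_onI)
  fix x y assume x: "x \<in> V \<times> {0::nat,1}" and y: "y \<in> V \<times> {0::nat,1}"
    and e: "(\<lambda>(a,c). {a, out_nb a c}) x = (\<lambda>(a,c). {a, out_nb a c}) y"
  obtain a c where xa: "x = (a,c)" by (cases x)
  obtain b d where yb: "y = (b,d)" by (cases y)
  have a: "a \<in> V" "c < 2" and b: "b \<in> V" "d < 2" using x y xa yb by auto
  have arc1: "PXarc r s a (out_nb a c)" and arc2: "PXarc r s b (out_nb b d)" using a b by (auto simp: PXarc_iff_out_nb)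
  have "{a, out_nb a c} = {b, out_nb b d}" using e xa yb by simp
  then have "(a = b \<and> out_nb a c = out_nb b d) \<or> (a = out_nb b d \<and> out_nb a c = b)" by (auto simp: doubleton_eq_iff)
  then show "x = y"
  proof
    assume "a = b \<and> out_nb a c = out_nb b d"
    then show ?thesis using out_nb_inj[OF a(1)] xa yb by auto
  next
    assume h: "a = out_nb b d \<and> out_nb a c = b"
    then have h1: "out_nb a c = b" and h2: "out_nb b d = a" by auto
    have "PXarc r s a b" using arc1 unfolding h1 .
    moreover have "PXarc r s b a" using arc2 unfolding h2 .
    ultimately show ?thesis using PXarc_asym by blast
  qed
qed

lemma card_PXE: "card (PXE r s) = 2 * card V"
  using PXE_eq_arc_image card_image[OF inj_on_arc_edge] card_cartesian_product[of V "{0::nat,1}"] by simp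

lemma card_layers_avoiding: "i < r \<Longrightarrow> card {y. y < r \<and> (\<forall>j\<le>s. (y + j) mod r \<noteq> i)} = r - Suc s"
proof -
  assume i: "i < r"
  define ex where "ex = (\<lambda>j. (i + (r - j)) mod r) ` {..s}"
  have inj: "inj_on (\<lambda>j. (i + (r - j)) mod r) {..s}"
  proof (rule inj_onI)
    fix a b assume a: "a \<in> {..s}" and b: "b \<in> {..s}" and e: "(i + (r - a)) mod r = (i + (r - b)) mod r"
    show "a = b"
    proof (rule ccontr)
      assume ne: "a \<noteq> b"
      { fix a b :: nat assume ab: "a < b" "b \<le> s" "(i + (r - a)) mod r = (i + (r - b)) mod r"
        have "i + (r - a) = (i + (r - b)) + (b - a)" using ab s_less_r by simp
        then have "((i + (r - b)) + (b - a)) mod r = ((i + (r - b)) + 0) mod r" using ab by simp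
        then have "(b - a) mod r = 0" using mod_add_left_cancel_nat[of "i + (r - b)" "b - a" r 0] by simp
        then have False using ab s_less_r by simp }
      then show False using ne a b e by (metis atMost_iff linorder_neqE_nat)
    qed
  qed
  have cex: "card ex = Suc s" unfolding ex_def using card_image[OF inj] by simp
  have exs: "ex \<subseteq> {..<r}" unfolding ex_def using r_ge_3 by auto
  have eq: "{y. y < r \<and> (\<forall>j\<le>s. (y + j) mod r \<noteq> i)} = {..<r} - ex"
  proof -
    have "(y + j) mod r = i \<longleftrightarrow> y = (i + (r - j)) mod r" if "y < r" "j \<le> s" for y j
    proof
      assume h: "(y + j) mod r = i"
      have "(i + (r - j)) mod r = ((y + j) mod r + (r - j)) mod r" using h by simp
      also have "\<dots> = (y + j + (r - j)) mod r" by (simp add: mod_add_left_eq)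
      also have "y + j + (r - j) = y + r" using that s_less_r by simp
      finally show "y = (i + (r - j)) mod r" using that by simp
    next
      assume h: "y = (i + (r - j)) mod r"
      have "(y + j) mod r = (i + (r - j) + j) mod r" using h by (simp add: mod_add_left_eq)
      also have "i + (r - j) + j = i + r" using that s_less_r by simp
      finally show "(y + j) mod r = i" using i by simp
    qed
    then show ?thesis unfolding ex_def by auto
  qed
  have fex: "finite ex" unfolding ex_def by simp
  have "card ({..<r} - ex) = r - Suc s" using card_Diff_subset[OF fex exs] cex by simp
  then show ?thesis using eq by simp
qed

lemma card_double_layer_eq: "card {y. y < r \<and> (2 * y + 1) mod r = e} \<le> 2"
proof (cases "{y. y < r \<and> (2 * y + 1) mod r = e} = {}")
  case True then show ?thesis by (subst True) simp
next
  case False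
  define Y where "Y = {y. y < r \<and> (2 * y + 1) mod r = e}"
  have fY: "finite Y" unfolding Y_def by simp
  define m where "m = Min Y"
  have "Y \<noteq> {}" using False unfolding Y_def .
  then have mY: "m \<in> Y" using Min_in[OF fY] unfolding m_def by blast
  have sub: "Y \<subseteq> {m, m + r div 2}"
  proof
    fix y assume yY: "y \<in> Y"
    have my: "m \<le> y" using fY yY unfolding m_def by simp
    show "y \<in> {m, m + r div 2}"
    proof (cases "y = m")
      case True then show ?thesis by simp
    next
      case False
      then have lt: "m < y" using my by simp
      have ey: "(2 * y + 1) mod r = e" using yY unfolding Y_def by blast
      have em: "(2 * m + 1) mod r = e" using mY unfolding Y_def by blast
      have "2 * y + 1 = 2 * m + 1 + 2 * (y - m)" using lt by simp
      then have "(2 * m + 1 + 2 * (y - m)) mod r = (2 * m + 1 + 0) mod r"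
        using ey em by (metis add_0_right)
      then have d: "(2 * (y - m)) mod r = 0" using mod_add_left_cancel_nat[of "2 * m + 1" "2 * (y - m)" r 0] by simp
      have yr: "y < r" using yY unfolding Y_def by simp
      have "2 * (y - m) = r"
      proof -
        obtain q where q: "2 * (y - m) = r * q" using d by (auto simp: mod_eq_0_iff_dvd dvd_def)
        have "0 < q" using q lt by (cases q) auto
        moreover have "r * q < r * 2" using q yr lt by linarith
        then have "q < 2" by simp
        ultimately have "q = 1" by simp
        then show ?thesis using q by simp
      qed
      then have "y = m + r div 2" using lt by simp
      then show ?thesis by simp
    qed
  qed
  have "card Y \<le> card {m, m + r div 2}" using sub by (intro card_mono) auto
  also have "\<dots> \<le> 2" by (simp add: card_insert_le_m1)
  finally show ?thesis unfolding Y_def .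
qed

lemma PXadj_PXV: "PXadj r s a b \<Longrightarrow> a \<in> V \<and> b \<in> V"
  by (auto simp: PXadj_iff dest: PXarc_PXV1 PXarc_PXV2)

definition twins where "twins p q \<longleftrightarrow> twin_threshold \<le> card (nbs p \<inter> nbs q)"

lemma twins_iff: "r \<noteq> 4 \<Longrightarrow> v \<in> V \<Longrightarrow> p \<in> nbs v \<Longrightarrow> q \<in> nbs v \<Longrightarrow> p \<noteq> q \<Longrightarrow>
  twins p q \<longleftrightarrow> (p \<in> out_nbs v \<and> q \<in> out_nbs v) \<or> (p \<in> in_nbs v \<and> q \<in> in_nbs v)"
proof -
  assume r4: "r \<noteq> 4" and v: "v \<in> V" and p: "p \<in> nbs v" and q: "q \<in> nbs v" and pq: "p \<noteq> q"
  have pc: "p \<in> out_nbs v \<or> p \<in> in_nbs v" and qc: "q \<in> out_nbs v \<or> q \<in> in_nbs v" using p q nbs_eq[OF v] by auto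
  have oo: "p \<in> out_nbs v \<Longrightarrow> q \<in> out_nbs v \<Longrightarrow> twins p q"
  proof -
    assume "p \<in> out_nbs v" "q \<in> out_nbs v"
    then have "(p = out_nb v 0 \<and> q = out_nb v 1) \<or> (p = out_nb v 1 \<and> q = out_nb v 0)" using pq by (auto simp: out_nbs_def)
    then show "twins p q" using twin_threshold_out_nbs[OF v] by (auto simp: twins_def Int_commute)
  qed
  have ii: "p \<in> in_nbs v \<Longrightarrow> q \<in> in_nbs v \<Longrightarrow> twins p q"
  proof -
    assume "p \<in> in_nbs v" "q \<in> in_nbs v"
    then have "(p = in_nb v 0 \<and> q = in_nb v 1) \<or> (p = in_nb v 1 \<and> q = in_nb v 0)" using pq by (auto simp: in_nbs_def)
    then show "twins p q" using twin_threshold_in_nbs[OF v] by (auto simp: twins_def Int_commute)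
  qed
  have io: "p \<in> in_nbs v \<Longrightarrow> q \<in> out_nbs v \<Longrightarrow> \<not> twins p q" unfolding twins_def using card_common_nbs_in_out_less[OF r4 v, of p q] by simp
  have oi: "p \<in> out_nbs v \<Longrightarrow> q \<in> in_nbs v \<Longrightarrow> \<not> twins p q" unfolding twins_def using card_common_nbs_in_out_less[OF r4 v, of q p] by (simp add: Int_commute)
  show ?thesis using pc qc oo ii io oi out_in_nbs_disjoint[OF v] by blast
qed

lemma mem_out_nbs_iff: "v \<in> V \<Longrightarrow> u \<in> out_nbs v \<longleftrightarrow> PXarc r s v u"
  unfolding PXarc_iff_out_nb out_nbs_def by (auto simp: less_2_cases_iff)
lemma mem_in_nbs_iff: "v \<in> V \<Longrightarrow> u \<in> in_nbs v \<longleftrightarrow> PXarc r s u v"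
  unfolding PXarc_iff_in_nb in_nbs_def by (auto simp: less_2_cases_iff)

end

section \<open>Automorphisms preserve or reverse all arcs when \<open>r \<noteq> 4\<close>\<close>

locale praeger_xu_aut = praeger_xu +
  fixes g :: "(nat \<times> nat) list \<Rightarrow> (nat \<times> nat) list"
  assumes aut: "is_graph_aut (PXV r s) (PXadj r s) g"
begin

lemma g_bij: "bij_betw g V V" using aut by (simp add: is_graph_aut_def)
lemma g_PXV: "v \<in> V \<Longrightarrow> g v \<in> V" using g_bij bij_betwE by blast
lemma g_inj: "inj_on g V" using g_bij by (simp add: bij_betw_def)
lemma g_img: "g ` V = V" using g_bij by (simp add: bij_betw_def)
lemma g_adj: "a \<in> V \<Longrightarrow> b \<in> V \<Longrightarrow> PXadj r s (g a) (g b) \<longleftrightarrow> PXadj r s a b"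
  using aut by (simp add: is_graph_aut_def)
lemma g_eq: "a \<in> V \<Longrightarrow> b \<in> V \<Longrightarrow> g a = g b \<longleftrightarrow> a = b"
  using g_inj by (auto simp: inj_on_def)

lemma nbs_image: "v \<in> V \<Longrightarrow> nbs (g v) = g ` nbs v"
proof
  assume v: "v \<in> V"
  show "g ` nbs v \<subseteq> nbs (g v)"
  proof
    fix z assume "z \<in> g ` nbs v"
    then obtain w where w: "w \<in> nbs v" "z = g w" by blast
    then have "PXadj r s v w" by (simp add: nbs_def)
    then show "z \<in> nbs (g v)" using w PXadj_PXV g_adj by (simp add: nbs_def)
  qed
  show "nbs (g v) \<subseteq> g ` nbs v"
  proof
    fix z assume z: "z \<in> nbs (g v)"
    then have "z \<in> V" using PXadj_PXV by (simp add: nbs_def)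
    then obtain w where w: "w \<in> V" "z = g w" using g_img by blast
    then have "PXadj r s v w" using z g_adj v by (simp add: nbs_def)
    then show "z \<in> g ` nbs v" using w by (simp add: nbs_def)
  qed
qed

lemma card_common_nbs_image: "a \<in> V \<Longrightarrow> b \<in> V \<Longrightarrow> card (nbs (g a) \<inter> nbs (g b)) = card (nbs a \<inter> nbs b)"
proof -
  assume a: "a \<in> V" and b: "b \<in> V"
  have "nbs (g a) \<inter> nbs (g b) = g ` (nbs a \<inter> nbs b)"
    using nbs_image[OF a] nbs_image[OF b] inj_on_image_Int[OF g_inj nbs_PXV[OF a] nbs_PXV[OF b]] by simp
  moreover have "inj_on g (nbs a \<inter> nbs b)" using g_inj nbs_PXV[OF a] by (meson inj_on_subset le_infI1)
  ultimately show ?thesis by (simp add: card_image)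
qed

lemma twins_image: "a \<in> V \<Longrightarrow> b \<in> V \<Longrightarrow> twins (g a) (g b) \<longleftrightarrow> twins a b"
  using card_common_nbs_image by (simp add: twins_def)

lemma out_nbs_image_cases: "r \<noteq> 4 \<Longrightarrow> v \<in> V \<Longrightarrow> g ` out_nbs v = out_nbs (g v) \<or> g ` out_nbs v = in_nbs (g v)"
proof -
  assume r4: "r \<noteq> 4" and v: "v \<in> V"
  have o0: "out_nb v 0 \<in> V" and o1: "out_nb v 1 \<in> V" using out_nb_PXV[OF v] by auto
  have n0: "g (out_nb v 0) \<in> nbs (g v)" and n1: "g (out_nb v 1) \<in> nbs (g v)"
    using nbs_image[OF v] nbs_eq[OF v] by (auto simp: out_nbs_def)
  have ne: "g (out_nb v 0) \<noteq> g (out_nb v 1)" using g_eq[OF o0 o1] out_nb_neq[OF v] by simp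
  have "twins (out_nb v 0) (out_nb v 1)"
    using twins_iff[OF r4 v, of "out_nb v 0" "out_nb v 1"] out_nb_neq[OF v] nbs_eq[OF v] by (auto simp: out_nbs_def)
  then have "twins (g (out_nb v 0)) (g (out_nb v 1))" using twins_image[OF o0 o1] by simp
  then have cases: "(g (out_nb v 0) \<in> out_nbs (g v) \<and> g (out_nb v 1) \<in> out_nbs (g v)) \<or>
     (g (out_nb v 0) \<in> in_nbs (g v) \<and> g (out_nb v 1) \<in> in_nbs (g v))"
    using twins_iff[OF r4 g_PXV[OF v] n0 n1 ne] by simp
  have im: "g ` out_nbs v = {g (out_nb v 0), g (out_nb v 1)}" by (simp add: out_nbs_def)
  have c2: "card (g ` out_nbs v) = 2" using im ne by simp
  show ?thesis
  proof (cases "g (out_nb v 0) \<in> out_nbs (g v) \<and> g (out_nb v 1) \<in> out_nbs (g v)")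
    case True
    then have "g ` out_nbs v \<subseteq> out_nbs (g v)" using im by simp
    then have "g ` out_nbs v = out_nbs (g v)" using card_subset_eq[of "out_nbs (g v)"] c2 card_out_nbs[OF g_PXV[OF v]]
      by (simp add: out_nbs_def)
    then show ?thesis by simp
  next
    case False
    then have "g ` out_nbs v \<subseteq> in_nbs (g v)" using cases unfolding im by blast
    then have "g ` out_nbs v = in_nbs (g v)" using card_subset_eq[of "in_nbs (g v)"] c2 card_in_nbs
      by (simp add: in_nbs_def)
    then show ?thesis by simp
  qed
qed

lemma nbs_image_cases:
  assumes r4: "r \<noteq> 4" and v: "v \<in> V"
  shows "g ` out_nbs v = out_nbs (g v) \<and> g ` in_nbs v = in_nbs (g v)
    \<or> g ` out_nbs v = in_nbs (g v) \<and> g ` in_nbs v = out_nbs (g v)"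
proof -
  have complement1: "B = D" if "A \<union> B = C \<union> D" "A \<inter> B = {}" "C \<inter> D = {}" "A = C"
    for A B C D :: "(nat \<times> nat) list set"
    using that by blast
  have complement2: "B = C" if "A \<union> B = C \<union> D" "A \<inter> B = {}" "C \<inter> D = {}" "A = D"
    for A B C D :: "(nat \<times> nat) list set"
    using that by blast
  have un: "g ` out_nbs v \<union> g ` in_nbs v = out_nbs (g v) \<union> in_nbs (g v)"
    using nbs_image[OF v] nbs_eq[OF v] nbs_eq[OF g_PXV[OF v]] by (simp add: image_Un)
  have d1: "g ` out_nbs v \<inter> g ` in_nbs v = {}"
    using inj_on_image_Int[OF g_inj out_nbs_PXV[OF v] in_nbs_PXV[OF v]] out_in_nbs_disjoint[OF v] by simp
  have d2: "out_nbs (g v) \<inter> in_nbs (g v) = {}" using out_in_nbs_disjoint[OF g_PXV[OF v]] .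
  from out_nbs_image_cases[OF r4 v] show ?thesis
  proof
    assume h: "g ` out_nbs v = out_nbs (g v)"
    have "g ` in_nbs v = in_nbs (g v)"
      using un d1 d2 h by (rule complement1)
    with h show ?thesis by (rule disjI1[OF conjI])
  next
    assume h: "g ` out_nbs v = in_nbs (g v)"
    have "g ` in_nbs v = out_nbs (g v)"
      using un d1 d2 h by (rule complement2)
    with h show ?thesis by (rule disjI2[OF conjI])
  qed
qed

definition keeps_orientation where "keeps_orientation v \<longleftrightarrow> g ` out_nbs v = out_nbs (g v)"

lemma in_nbs_image_if_keeps:
  assumes "r \<noteq> 4" "v \<in> V" "keeps_orientation v"
  shows "g ` in_nbs v = in_nbs (g v)"
  using nbs_image_cases[OF assms(1,2)]
proof
  assume "g ` out_nbs v = in_nbs (g v) \<and> g ` in_nbs v = out_nbs (g v)"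
  then have "out_nbs (g v) = in_nbs (g v)" using assms(3) unfolding keeps_orientation_def by metis
  moreover have "out_nbs (g v) \<noteq> in_nbs (g v)"
    using out_in_nbs_disjoint[OF g_PXV[OF assms(2)]] by (auto simp: out_nbs_def)
  ultimately show ?thesis by contradiction
qed simp

lemma nbs_image_if_not_keeps:
  assumes "r \<noteq> 4" "v \<in> V" "\<not> keeps_orientation v"
  shows "g ` out_nbs v = in_nbs (g v) \<and> g ` in_nbs v = out_nbs (g v)"
  using nbs_image_cases[OF assms(1,2)] assms(3) unfolding keeps_orientation_def by (elim disjE) simp_all

lemma keeps_orientation_PXarc: "r \<noteq> 4 \<Longrightarrow> PXarc r s v u \<Longrightarrow> keeps_orientation v = keeps_orientation u"
proof -
  assume r4: "r \<noteq> 4" and a: "PXarc r s v u"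
  have v: "v \<in> V" and u: "u \<in> V" using PXarc_PXV1[OF a] PXarc_PXV2[OF a] .
  have uo: "u \<in> out_nbs v" using mem_out_nbs_iff[OF v] a by simp
  have vi: "v \<in> in_nbs u" using mem_in_nbs_iff[OF u] a by simp
  show ?thesis
  proof
    assume pv: "keeps_orientation v"
    then have "g u \<in> out_nbs (g v)" using uo by (auto simp: keeps_orientation_def)
    then have a1: "PXarc r s (g v) (g u)" using mem_out_nbs_iff[OF g_PXV[OF v]] by simp
    show "keeps_orientation u"
    proof (rule ccontr)
      assume "\<not> keeps_orientation u"
      then have "g v \<in> out_nbs (g u)" using nbs_image_if_not_keeps[OF r4 u] vi by blast
      then have "PXarc r s (g u) (g v)" using mem_out_nbs_iff[OF g_PXV[OF u]] by simp
      then show False using PXarc_asym a1 by blast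
    qed
  next
    assume pu: "keeps_orientation u"
    show "keeps_orientation v"
    proof (rule ccontr)
      assume "\<not> keeps_orientation v"
      then have "g u \<in> in_nbs (g v)" using nbs_image_if_not_keeps[OF r4 v] uo by blast
      then have a1: "PXarc r s (g u) (g v)" using mem_in_nbs_iff[OF g_PXV[OF v]] by simp
      have "g v \<in> in_nbs (g u)" using in_nbs_image_if_keeps[OF r4 u pu] vi by blast
      then have "PXarc r s (g v) (g u)" using mem_in_nbs_iff[OF g_PXV[OF u]] by simp
      then show False using PXarc_asym a1 by blast
    qed
  qed
qed

lemma keeps_orientation_const: "r \<noteq> 4 \<Longrightarrow> v \<in> V \<Longrightarrow> w \<in> V \<Longrightarrow> keeps_orientation v = keeps_orientation w"
  using PXarc_invariant_const[of keeps_orientation v w] keeps_orientation_PXarc by blast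

lemma g_preserves_arcs: "r \<noteq> 4 \<Longrightarrow> v \<in> V \<Longrightarrow> keeps_orientation v \<Longrightarrow> PXarc r s a b \<Longrightarrow> PXarc r s (g a) (g b)"
proof -
  assume r4: "r \<noteq> 4" and v: "v \<in> V" and p: "keeps_orientation v" and ab: "PXarc r s a b"
  have a: "a \<in> V" using PXarc_PXV1[OF ab] .
  have pa: "keeps_orientation a" using keeps_orientation_const[OF r4 v a] p by simp
  have "b \<in> out_nbs a" using mem_out_nbs_iff[OF a] ab by simp
  then have "g b \<in> out_nbs (g a)" using pa by (auto simp: keeps_orientation_def)
  then show ?thesis using mem_out_nbs_iff[OF g_PXV[OF a]] by simp
qed

lemma g_reverses_arcs: "r \<noteq> 4 \<Longrightarrow> v \<in> V \<Longrightarrow> \<not> keeps_orientation v \<Longrightarrow> PXarc r s a b \<Longrightarrow> PXarc r s (g b) (g a)"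
proof -
  assume r4: "r \<noteq> 4" and v: "v \<in> V" and p: "\<not> keeps_orientation v" and ab: "PXarc r s a b"
  have a: "a \<in> V" using PXarc_PXV1[OF ab] .
  have pa: "\<not> keeps_orientation a" using keeps_orientation_const[OF r4 v a] p by simp
  have "b \<in> out_nbs a" using mem_out_nbs_iff[OF a] ab by simp
  then have "g b \<in> in_nbs (g a)" using nbs_image_if_not_keeps[OF r4 a pa] by blast
  then show ?thesis using mem_in_nbs_iff[OF g_PXV[OF a]] by simp
qed

lemma layer_shift: "(\<And>a b. PXarc r s a b \<Longrightarrow> PXarc r s (g a) (g b)) \<Longrightarrow> v0 \<in> V \<Longrightarrow>
   \<exists>d<r. \<forall>v\<in>V. layer (g v) = (layer v + d) mod r"
proof -
  assume h: "\<And>a b. PXarc r s a b \<Longrightarrow> PXarc r s (g a) (g b)" and v0: "v0 \<in> V"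
  define d where "d = (layer (g v0) + (r - layer v0)) mod r"
  define P where "P v \<longleftrightarrow> layer (g v) = (layer v + d) mod r" for v
  have "P v0"
  proof -
    have "(layer v0 + d) mod r = (layer v0 + (layer (g v0) + (r - layer v0))) mod r"
      unfolding d_def by (simp add: mod_add_right_eq)
    also have "layer v0 + (layer (g v0) + (r - layer v0)) = layer (g v0) + r" using layer_less[OF v0] by simp
    finally show ?thesis unfolding P_def using layer_less[OF g_PXV[OF v0]] by simp
  qed
  have step: "P a = P b" if ab: "PXarc r s a b" for a b
  proof -
    have a: "a \<in> V" using PXarc_PXV1[OF ab] .
    have lb: "layer b = (layer a + 1) mod r" using layer_PXarc[OF ab] .
    have lgb: "layer (g b) = (layer (g a) + 1) mod r" using layer_PXarc[OF h[OF ab]] .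
    have r1: "((layer a + 1) mod r + d) mod r = (1 + (layer a + d)) mod r"
      by (subst mod_add_left_eq) (simp add: ac_simps)
    have "P b \<longleftrightarrow> (1 + layer (g a)) mod r = (1 + (layer a + d)) mod r"
      unfolding P_def lb lgb r1 by (simp add: ac_simps)
    also have "\<dots> \<longleftrightarrow> layer (g a) mod r = (layer a + d) mod r" by (rule mod_add_left_cancel_nat)
    also have "\<dots> \<longleftrightarrow> P a" unfolding P_def using layer_less[OF g_PXV[OF a]] by simp
    finally show ?thesis by simp
  qed
  have "\<forall>v\<in>V. P v" using PXarc_invariant_const[of P v0] step \<open>P v0\<close> v0 by blast
  moreover have "d < r" unfolding d_def using r_ge_3 by simp
  ultimately show ?thesis unfolding P_def by blast
qed

lemma layer_sum_const: "(\<And>a b. PXarc r s a b \<Longrightarrow> PXarc r s (g b) (g a)) \<Longrightarrow> v \<in> V \<Longrightarrow> w \<in> V \<Longrightarrow>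
   (layer (g v) + layer v) mod r = (layer (g w) + layer w) mod r"
proof -
  assume h: "\<And>a b. PXarc r s a b \<Longrightarrow> PXarc r s (g b) (g a)" and v: "v \<in> V" and w: "w \<in> V"
  have step: "(layer (g a) + layer a) mod r = (layer (g b) + layer b) mod r" if ab: "PXarc r s a b" for a b
  proof -
    have lb: "layer b = (layer a + 1) mod r" using layer_PXarc[OF ab] .
    have lga: "layer (g a) = (layer (g b) + 1) mod r" using layer_PXarc[OF h[OF ab]] .
    have "(layer (g a) + layer a) mod r = (layer (g b) + 1 + layer a) mod r" unfolding lga by (simp add: mod_add_left_eq)
    also have "\<dots> = (layer (g b) + (layer a + 1)) mod r" by (simp add: ac_simps)
    also have "\<dots> = (layer (g b) + layer b) mod r" unfolding lb by (simp add: mod_add_right_eq)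
    finally show ?thesis .
  qed
  show ?thesis using PXarc_invariant_const[of "\<lambda>v. (layer (g v) + layer v) mod r" v w] step v w by blast
qed

definition fixed_edges where "fixed_edges = {e \<in> PXE r s. g ` e = e}"

lemma fixed_edge_cases: "e \<in> fixed_edges \<Longrightarrow> \<exists>a b. PXarc r s a b \<and> e = {a, b} \<and> ((g a = a \<and> g b = b) \<or> (g a = b \<and> g b = a))"
proof -
  assume "e \<in> fixed_edges"
  then have e: "e \<in> PXE r s" and ge: "g ` e = e" by (auto simp: fixed_edges_def)
  then obtain a c where a: "a \<in> V" "c \<in> {0,1}" "e = {a, out_nb a c}" using PXE_eq_arc_image by auto
  have ab: "PXarc r s a (out_nb a c)" unfolding PXarc_iff_out_nb using a by (intro conjI exI[where x=c]) auto
  have "{g a, g (out_nb a c)} = {a, out_nb a c}" using ge a(3) by simp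
  then have "(g a = a \<and> g (out_nb a c) = out_nb a c) \<or> (g a = out_nb a c \<and> g (out_nb a c) = a)"
    by (auto simp: doubleton_eq_iff)
  then show ?thesis using ab a(3) by blast
qed

lemma fixed_edges_empty_if_rotation: "0 < d \<Longrightarrow> d < r \<Longrightarrow> \<forall>v\<in>V. layer (g v) = (layer v + d) mod r \<Longrightarrow> fixed_edges = {}"
proof (rule ccontr)
  assume d: "0 < d" "d < r" and h: "\<forall>v\<in>V. layer (g v) = (layer v + d) mod r" and ne: "fixed_edges \<noteq> {}"
  then obtain e where "e \<in> fixed_edges" by blast
  then obtain a b where ab: "PXarc r s a b" and c: "(g a = a \<and> g b = b) \<or> (g a = b \<and> g b = a)"
    using fixed_edge_cases by blast
  have a: "a \<in> V" and b: "b \<in> V" using PXarc_PXV1[OF ab] PXarc_PXV2[OF ab] by auto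
  have la: "layer a < r" using layer_less[OF a] .
  have lb: "layer b = (layer a + 1) mod r" using layer_PXarc[OF ab] .
  show False using c
  proof
    assume "g a = a \<and> g b = b"
    then have "(layer a + d) mod r = layer a" using h a by metis
    then have "d mod r = 0" using add_mod_eq_self_iff[OF la] by blast
    then show False using d by simp
  next
    assume gg: "g a = b \<and> g b = a"
    then have "(layer a + d) mod r = (layer a + 1) mod r" using h a lb by metis
    then have "d mod r = 1 mod r" using mod_add_left_cancel_nat by blast
    then have d1: "d = 1" using d r_ge_3 by simp
    have "layer a = (layer b + 1) mod r" using h b gg d1 by metis
    also have "\<dots> = (layer a + 2) mod r" unfolding lb by (simp add: mod_Suc_eq)
    finally show False using layer_neq_plus_2[OF la] by simp
  qed
qed

text \<open>A reversing automorphism maps layer \<open>y\<close> to \<open>e - y\<close> for a constant \<open>e\<close>, so it fixes an edge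
  only by swapping its ends, which then lie in layers \<open>y, y + 1\<close> with \<open>2 y + 1 \<equiv> e\<close>.\<close>

lemma card_fixed_edges_if_reversing: "(\<And>a b. PXarc r s a b \<Longrightarrow> PXarc r s (g b) (g a)) \<Longrightarrow> v0 \<in> V \<Longrightarrow> card fixed_edges \<le> 2 * 2 ^ s"
proof -
  assume h: "\<And>a b. PXarc r s a b \<Longrightarrow> PXarc r s (g b) (g a)" and v0: "v0 \<in> V"
  define e0 where "e0 = (layer (g v0) + layer v0) mod r"
  have inv: "\<And>v. v \<in> V \<Longrightarrow> (layer (g v) + layer v) mod r = e0" unfolding e0_def using layer_sum_const[OF h _ v0] by blast
  define Y where "Y = {y. y < r \<and> (2 * y + 1) mod r = e0}"
  define T where "T = {a \<in> V. layer a \<in> Y}"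
  have sub: "fixed_edges \<subseteq> (\<lambda>a. {a, g a}) ` T"
  proof
    fix e assume "e \<in> fixed_edges"
    then obtain a b where ab: "PXarc r s a b" and eab: "e = {a, b}" and c: "(g a = a \<and> g b = b) \<or> (g a = b \<and> g b = a)"
      using fixed_edge_cases by blast
    have a: "a \<in> V" and b: "b \<in> V" using PXarc_PXV1[OF ab] PXarc_PXV2[OF ab] by auto
    have la: "layer a < r" using layer_less[OF a] .
    have lb: "layer b = (layer a + 1) mod r" using layer_PXarc[OF ab] .
    have nf: "\<not> (g a = a \<and> g b = b)"
    proof
      assume gg: "g a = a \<and> g b = b"
      have "(layer a + layer a) mod r = e0" using inv[OF a] gg by simp
      moreover have "(layer b + layer b) mod r = e0" using inv[OF b] gg by simp
      moreover have "(layer b + layer b) mod r = (layer a + layer a + 2) mod r"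
        unfolding lb by (subst mod_add_eq) (simp add: ac_simps)
      ultimately have "(layer a + layer a + 2) mod r = (layer a + layer a + 0) mod r" by simp
      then have "2 mod r = 0" using mod_add_left_cancel_nat[of "layer a + layer a" 2 r 0] by simp
      then show False using r_ge_3 by simp
    qed
    then have gg: "g a = b" using c by blast
    have "(layer b + layer a) mod r = e0" using inv[OF a] gg by simp
    moreover have "(layer b + layer a) mod r = (2 * layer a + 1) mod r"
      unfolding lb by (subst mod_add_left_eq) (simp add: ac_simps mult_2_right)
    ultimately have "layer a \<in> Y" using la unfolding Y_def by simp
    then have "a \<in> T" using a unfolding T_def by simp
    then show "e \<in> (\<lambda>a. {a, g a}) ` T" using eab gg by blast
  qed
  have fT: "finite T" unfolding T_def using finite_PXV by simp
  have "card fixed_edges \<le> card ((\<lambda>a. {a, g a}) ` T)" using sub fT by (intro card_mono) auto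
  also have "\<dots> \<le> card T" using fT by (rule card_image_le)
  also have "card T = card Y * 2 ^ s" unfolding T_def using card_vertices_in_layers[of Y] unfolding Y_def by auto
  also have "\<dots> \<le> 2 * 2 ^ s" using card_double_layer_eq[of e0] unfolding Y_def by simp
  finally show ?thesis .
qed

lemma fpr_edges_eq: "fpr_edges (PXE r s) g = real (card fixed_edges) / real (card (PXE r s))"
  unfolding fpr_edges_def fixed_edges_def by simp

lemma fpr_edges_le_one_third: "card fixed_edges \<le> 2 * 2 ^ s \<Longrightarrow> fpr_edges (PXE r s) g \<le> 1 / 3"
proof -
  assume c: "card fixed_edges \<le> 2 * 2 ^ s"
  have cE: "card (PXE r s) = 2 * (r * 2 ^ s)" using card_PXE card_PXV by simp
  have pos: "0 < real (card (PXE r s))" using cE r_ge_3 by simp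
  have "3 * real (card fixed_edges) \<le> real (card (PXE r s))"
  proof -
    have "3 * card fixed_edges \<le> 3 * (2 * 2 ^ s)" using c by simp
    also have "\<dots> \<le> 2 * (r * 2 ^ s)" using r_ge_3 by simp
    finally show ?thesis using cE by (simp add: of_nat_mult[symmetric] del: of_nat_mult)
  qed
  then show ?thesis unfolding fpr_edges_eq using pos by (simp add: divide_le_eq)
qed

lemma card_PXE_less_fixed_edges: "fpr_edges (PXE r s) g > 1 / 3 \<Longrightarrow> card (PXE r s) < 3 * card fixed_edges"
proof -
  assume f: "fpr_edges (PXE r s) g > 1 / 3"
  have cE: "card (PXE r s) = 2 * (r * 2 ^ s)" using card_PXE card_PXV by simp
  have pos: "0 < real (card (PXE r s))" using cE r_ge_3 by simp
  have "1 / 3 < real (card fixed_edges) / real (card (PXE r s))" using f unfolding fpr_edges_eq .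
  then have "real (card (PXE r s)) < 3 * real (card fixed_edges)" using pos by (simp add: field_simps)
  then show ?thesis by linarith
qed

end

section \<open>Arc- and layer-preserving automorphisms lie in \<open>K\<close>\<close>

definition PXtau_set :: "nat set \<Rightarrow> nat \<times> nat \<Rightarrow> nat \<times> nat" where
  "PXtau_set I p = (if fst p \<in> I then (fst p, 1 - snd p) else p)"

lemma PXtau_set_PXK: "I \<subseteq> {..<r} \<Longrightarrow> PXtau_set I \<in> PXK r"
proof (induction I rule: infinite_finite_induct)
  case (infinite I)
  then show ?case using finite_subset by blast
next
  case empty
  have "PXtau_set {} = id" by (simp add: PXtau_set_def fun_eq_iff)
  then show ?case using PXK.PXK_id by metis
next
  case (insert i I)
  have "PXtau_set (insert i I) = PXtau i \<circ> PXtau_set I"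
    using insert.hyps(2) by (auto simp: PXtau_set_def PXtau_def fun_eq_iff)
  then show ?case using insert PXK.PXK_step by (metis insert_subset lessThan_iff)
qed

locale arc_layer_preserving = praeger_xu_aut +
  assumes preserves_arcs: "\<And>a b. PXarc r s a b \<Longrightarrow> PXarc r s (g a) (g b)"
    and fixes_layers: "\<And>v. v \<in> V \<Longrightarrow> layer (g v) = layer v"
begin

lemma g_out_nb: "v \<in> V \<Longrightarrow> c < 2 \<Longrightarrow> \<exists>c'<2. g (out_nb v c) = out_nb (g v) c'"
proof -
  assume v: "v \<in> V" and c: "c < 2"
  have "PXarc r s v (out_nb v c)" unfolding PXarc_iff_out_nb using v c by blast
  then have "PXarc r s (g v) (g (out_nb v c))" by (rule preserves_arcs)
  then show ?thesis unfolding PXarc_iff_out_nb by blast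
qed

lemma g_in_nb: "v \<in> V \<Longrightarrow> c < 2 \<Longrightarrow> \<exists>c'<2. g (in_nb v c) = in_nb (g v) c'"
proof -
  assume v: "v \<in> V" and c: "c < 2"
  have "PXarc r s (in_nb v c) v" unfolding PXarc_iff_in_nb using v c by blast
  then have "PXarc r s (g (in_nb v c)) (g v)" by (rule preserves_arcs)
  then show ?thesis unfolding PXarc_iff_in_nb by blast
qed

lemma nth_g_out_nb: "v \<in> V \<Longrightarrow> c < 2 \<Longrightarrow> Suc j < s \<Longrightarrow> g (out_nb v c) ! j = g v ! Suc j"
  using g_out_nb[of v c] nth_out_nb[OF g_PXV] by force

lemma nth_g_in_nb: "v \<in> V \<Longrightarrow> c < 2 \<Longrightarrow> Suc j < s \<Longrightarrow> g (in_nb v c) ! Suc j = g v ! j"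
  using g_in_nb[of v c] nth_in_nb[OF g_PXV, of v "Suc j"] by force

primrec out_iter where "out_iter v 0 = v" | "out_iter v (Suc n) = out_iter (out_nb v 0) n"
primrec in_iter where "in_iter v 0 = v" | "in_iter v (Suc n) = in_iter (in_nb v 0) n"

lemma out_iter_PXV: "v \<in> V \<Longrightarrow> out_iter v n \<in> V"
proof (induction n arbitrary: v)
  case 0 then show ?case by simp
next
  case (Suc n) then show ?case using Suc.IH[OF out_nb_PXV[OF Suc.prems, of 0]] by simp
qed
lemma nth_out_iter: "v \<in> V \<Longrightarrow> j + n < s \<Longrightarrow> out_iter v n ! j = v ! (j + n)"
proof (induction n arbitrary: v j)
  case 0 then show ?case by simp
next
  case (Suc n)
  have "out_iter v (Suc n) ! j = out_nb v 0 ! (j + n)" using Suc out_nb_PXV[of v 0] by simp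
  also have "\<dots> = v ! (j + Suc n)" using nth_out_nb[OF Suc.prems(1), of "j + n" 0] Suc.prems by simp
  finally show ?case .
qed

lemma nth_g_out_iter: "v \<in> V \<Longrightarrow> j + n < s \<Longrightarrow> g (out_iter v n) ! j = g v ! (j + n)"
proof (induction n arbitrary: v j)
  case 0 then show ?case by simp
next
  case (Suc n)
  have "g (out_iter v (Suc n)) ! j = g (out_nb v 0) ! (j + n)" using Suc out_nb_PXV[of v 0] by simp
  also have "\<dots> = g v ! (j + Suc n)" using nth_g_out_nb[OF Suc.prems(1), of 0 "j + n"] Suc.prems by simp
  finally show ?case .
qed

lemma nth_g_in_iter: "v \<in> V \<Longrightarrow> j + n < s \<Longrightarrow> g (in_iter v n) ! (j + n) = g v ! j"
proof (induction n arbitrary: v j)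
  case 0 then show ?case by simp
next
  case (Suc n)
  have "g (in_iter v (Suc n)) ! (j + Suc n) = g (in_iter (in_nb v 0) n) ! (Suc j + n)" by simp
  also have "\<dots> = g (in_nb v 0) ! Suc j" using Suc.IH[of "in_nb v 0" "Suc j"] Suc.prems in_nb_PXV[of v 0] by simp
  also have "\<dots> = g v ! j" using nth_g_in_nb[OF Suc.prems(1), of 0 j] Suc.prems by simp
  finally show ?case .
qed

lemma in_iter_eq: "v \<in> V \<Longrightarrow> w \<in> V \<Longrightarrow> layer v = layer w \<Longrightarrow> n < s \<Longrightarrow> take (s - n) v = take (s - n) w \<Longrightarrow> in_iter v n = in_iter w n"
proof (induction n arbitrary: v w)
  case 0
  then show ?case using length_PXV[of v] length_PXV[of w] by simp
next
  case (Suc n)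
  have iv: "in_nb v 0 \<in> V" "in_nb w 0 \<in> V" using in_nb_PXV Suc.prems by auto
  have l: "layer (in_nb v 0) = layer (in_nb w 0)" using layer_in_nb Suc.prems by simp
  have t: "take (s - n) (in_nb v 0) = take (s - n) (in_nb w 0)"
  proof -
    have lv: "length v = s" "length w = s" using length_PXV Suc.prems by auto
    have "take (s - n) (in_nb v 0) = ((layer v + r - 1) mod r, 0) # take (s - Suc n) (butlast v)"
      using Suc.prems(4) by (simp add: in_nb_def take_Cons' Suc_diff_Suc)
    also have "take (s - Suc n) (butlast v) = take (s - Suc n) v" using lv Suc.prems(4) by (simp add: take_butlast)
    finally have a: "take (s - n) (in_nb v 0) = ((layer v + r - 1) mod r, 0) # take (s - Suc n) v" .
    have "take (s - n) (in_nb w 0) = ((layer w + r - 1) mod r, 0) # take (s - Suc n) (butlast w)"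
      using Suc.prems(4) by (simp add: in_nb_def take_Cons' Suc_diff_Suc)
    also have "take (s - Suc n) (butlast w) = take (s - Suc n) w" using lv Suc.prems(4) by (simp add: take_butlast)
    finally have b: "take (s - n) (in_nb w 0) = ((layer w + r - 1) mod r, 0) # take (s - Suc n) w" .
    show ?thesis using a b Suc.prems(3,5) by simp
  qed
  show ?case using Suc.IH[OF iv l _ t] Suc.prems(4) by simp
qed

text \<open>\<open>v\<close> and \<open>w\<close> have the same \<open>(s - 1)\<close>-fold in-neighbour \<open>u\<close>, and since \<open>g\<close> maps in-arcs to
  in-arcs, the first points of \<open>g v\<close> and \<open>g w\<close> both equal the last point of \<open>g u\<close>.\<close>

lemma g_first_point: "v \<in> V \<Longrightarrow> w \<in> V \<Longrightarrow> v ! 0 = w ! 0 \<Longrightarrow> g v ! 0 = g w ! 0"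
proof -
  assume v: "v \<in> V" and w: "w \<in> V" and e: "v ! 0 = w ! 0"
  have l: "layer v = layer w" using e by (simp add: layer_def)
  have t: "take (s - (s - 1)) v = take (s - (s - 1)) w"
    using e s_pos length_PXV[OF v] length_PXV[OF w] by (simp add: take_Suc_conv_app_nth)
  have ie: "in_iter v (s - 1) = in_iter w (s - 1)" using in_iter_eq[OF v w l _ t] s_pos by simp
  have "g v ! 0 = g (in_iter v (s - 1)) ! (0 + (s - 1))" using nth_g_in_iter[OF v, of 0 "s - 1"] s_pos by simp
  also have "\<dots> = g w ! 0" unfolding ie using nth_g_in_iter[OF w, of 0 "s - 1"] s_pos by simp
  finally show ?thesis .
qed

definition point_map where "point_map p = g (SOME v. v \<in> V \<and> v ! 0 = p) ! 0"

lemma g_first_point_map: "v \<in> V \<Longrightarrow> g v ! 0 = point_map (v ! 0)"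
proof -
  assume v: "v \<in> V"
  have "\<exists>u. u \<in> V \<and> u ! 0 = v ! 0" using v by blast
  then have u: "(SOME u. u \<in> V \<and> u ! 0 = v ! 0) \<in> V \<and> (SOME u. u \<in> V \<and> u ! 0 = v ! 0) ! 0 = v ! 0"
    by (rule someI_ex)
  then show ?thesis unfolding point_map_def using g_first_point[OF v] by metis
qed

lemma g_eq_map_point_map: "v \<in> V \<Longrightarrow> g v = map point_map v"
proof (rule nth_equalityI)
  assume v: "v \<in> V"
  show "length (g v) = length (map point_map v)" using length_PXV[OF v] length_PXV[OF g_PXV[OF v]] by simp
  fix j assume "j < length (g v)"
  then have j: "j < s" using length_PXV[OF g_PXV[OF v]] by simp
  have "g v ! j = g (out_iter v j) ! 0" using nth_g_out_iter[OF v, of 0 j] j by simp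
  also have "\<dots> = point_map (out_iter v j ! 0)" using g_first_point_map[OF out_iter_PXV[OF v]] .
  also have "\<dots> = point_map (v ! j)" using nth_out_iter[OF v, of 0 j] j by simp
  finally show "g v ! j = map point_map v ! j" using j length_PXV[OF v] by simp
qed

definition head_bits where "head_bits b = b # replicate (s - 1) (0::nat)"

lemma head_bits_bit_lists: "b < 2 \<Longrightarrow> head_bits b \<in> bit_lists"
  using s_pos by (auto simp: head_bits_def bit_lists_def less_2_cases_iff)

lemma bits_vertex_head_bits: "y < r \<Longrightarrow> bits_vertex y (head_bits b) ! 0 = (y, b)"
  using s_pos by (simp add: bits_vertex_def head_bits_def)

lemma point_map_fst: "p \<in> PXpt r \<Longrightarrow> fst (point_map p) = fst p \<and> snd (point_map p) < 2"
proof -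
  assume p: "p \<in> PXpt r"
  obtain y b where yb: "p = (y, b)" "y < r" "b < 2" using p by (auto simp: PXpt_def)
  define u where "u = bits_vertex y (head_bits b)"
  have u: "u \<in> V" "layer u = y" using bits_vertex_PXV[OF yb(2) head_bits_bit_lists[OF yb(3)]] u_def by auto
  have u0: "u ! 0 = p" using bits_vertex_head_bits[OF yb(2)] u_def yb by simp
  have "point_map p = g u ! 0" using g_first_point_map[OF u(1)] u0 by simp
  moreover have "g u ! 0 = ((layer (g u) + 0) mod r, snd (g u ! 0))" using nth_PXV[OF g_PXV[OF u(1)], of 0] s_pos by simp
  moreover have "snd (g u ! 0) < 2" using snd_nth_PXV[OF g_PXV[OF u(1)], of 0] s_pos by simp
  moreover have "fst (g u ! 0) = layer (g u)" by (simp add: layer_def)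
  ultimately show ?thesis using fixes_layers[OF u(1)] u(2) yb by simp
qed

lemma point_map_neq: "y < r \<Longrightarrow> point_map (y, 0) \<noteq> point_map (y, 1)"
proof
  assume y: "y < r" and e: "point_map (y, 0) = point_map (y, 1)"
  define u where "u = bits_vertex y (head_bits 0)"
  define u' where "u' = bits_vertex y (head_bits 1)"
  have u: "u \<in> V" and u': "u' \<in> V" using bits_vertex_PXV[OF y head_bits_bit_lists] u_def u'_def by auto
  have "map point_map u = map point_map u'"
  proof (rule nth_equalityI)
    show "length (map point_map u) = length (map point_map u')" using length_PXV[OF u] length_PXV[OF u'] by simp
    fix j assume "j < length (map point_map u)"
    then have j: "j < s" using length_PXV[OF u] by simp
    show "map point_map u ! j = map point_map u' ! j"
    proof (cases j)
      case 0 then show ?thesis using e bits_vertex_head_bits[OF y] u_def u'_def j by (simp add: bits_vertex_def head_bits_def)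
    next
      case (Suc i) then show ?thesis using j by (simp add: u_def u'_def bits_vertex_def head_bits_def)
    qed
  qed
  then have "g u = g u'" using g_eq_map_point_map[OF u] g_eq_map_point_map[OF u'] by simp
  then have "u = u'" using g_eq[OF u u'] by simp
  then have "u ! 0 = u' ! 0" by simp
  then show False using bits_vertex_head_bits[OF y] u_def u'_def by simp
qed

definition flipped_layers where "flipped_layers = {y. y < r \<and> point_map (y, 0) = (y, 1)}"

lemma point_map_eq_PXtau_set: "p \<in> PXpt r \<Longrightarrow> point_map p = PXtau_set flipped_layers p"
proof -
  assume "p \<in> PXpt r"
  then obtain y b where p: "p = (y, b)" and y: "y < r" and b: "b < 2" by (auto simp: PXpt_def)
  have pt: "(y, c) \<in> PXpt r" if "c < 2" for c using y that by (simp add: PXpt_def)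
  define c0 where "c0 = snd (point_map (y, 0))"
  define c1 where "c1 = snd (point_map (y, 1))"
  have c0: "point_map (y, 0) = (y, c0)" "c0 < 2"
    using point_map_fst[OF pt[of 0]] unfolding c0_def by (auto simp: prod_eq_iff)
  have c1: "point_map (y, 1) = (y, c1)" "c1 < 2"
    using point_map_fst[OF pt[of 1]] unfolding c1_def by (auto simp: prod_eq_iff)
  have "c0 \<noteq> c1" using point_map_neq[OF y] c0 c1 by auto
  then show ?thesis
    using p y b c0 c1 by (auto simp: PXtau_set_def flipped_layers_def less_2_cases_iff)
qed

lemma g_eq_map_PXtau_set: "v \<in> V \<Longrightarrow> g v = map (PXtau_set flipped_layers) v"
proof -
  assume v: "v \<in> V"
  have "point_map p = PXtau_set flipped_layers p" if "p \<in> set v" for p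
    using that nth_PXV_in_PXpt[OF v] point_map_eq_PXtau_set by (metis in_set_conv_nth length_PXV[OF v])
  then show ?thesis using g_eq_map_point_map[OF v] by simp
qed

lemma fixed_edge_ends_fixed:
  assumes "e \<in> fixed_edges" and "v \<in> e"
  shows "g v = v"
proof -
  obtain a b where ab: "PXarc r s a b" "e = {a, b}" and "(g a = a \<and> g b = b) \<or> (g a = b \<and> g b = a)"
    using fixed_edge_cases[OF assms(1)] by blast
  moreover have "g a \<noteq> b"
    using fixes_layers[OF PXarc_PXV1[OF ab(1)]] layer_PXarc[OF ab(1)] PXarc_neq[OF ab(1)]
      add_mod_eq_self_iff[OF layer_less[OF PXarc_PXV1[OF ab(1)]], of 1] r_ge_3 by auto
  ultimately show ?thesis using assms(2) by auto
qed

lemma flipped_layers_nonempty: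
  assumes "\<exists>v\<in>V. g v \<noteq> v"
  shows "flipped_layers \<noteq> {}"
proof
  assume "flipped_layers = {}"
  moreover have "PXtau_set {} = id" by (simp add: PXtau_set_def fun_eq_iff)
  ultimately have "\<forall>v\<in>V. g v = v" using g_eq_map_PXtau_set by simp
  then show False using assms by blast
qed

lemma fixed_vertex_avoids_flipped:
  assumes "i \<in> flipped_layers" "a \<in> V" "g a = a" "j < s"
  shows "(layer a + j) mod r \<noteq> i"
proof
  assume e: "(layer a + j) mod r = i"
  have "a ! j = PXtau_set flipped_layers (a ! j)"
    using g_eq_map_PXtau_set[OF assms(2)] assms(3,4) length_PXV[OF assms(2)] by (metis nth_map)
  then have "snd (a ! j) = 1 - snd (a ! j)"
    using fst_nth_PXV[OF assms(2,4)] e assms(1) by (auto simp: PXtau_set_def prod_eq_iff)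
  then show False using snd_nth_PXV[OF assms(2,4)] by arith
qed

lemma card_fixed_edges_if_flipped:
  assumes i: "i \<in> flipped_layers"
  shows "card fixed_edges \<le> (r - Suc s) * 2 ^ s * 2"
proof -
  define G where "G = {y. y < r \<and> (\<forall>j\<le>s. (y + j) mod r \<noteq> i)}"
  define A where "A = {a \<in> V. layer a \<in> G}"
  have sub: "fixed_edges \<subseteq> (\<lambda>(a,c). {a, out_nb a c}) ` (A \<times> {0,1})"
  proof
    fix e assume eF: "e \<in> fixed_edges"
    then obtain a b where ab: "PXarc r s a b" "e = {a, b}"
      using fixed_edge_cases by blast
    then have ga: "g a = a" and gb: "g b = b" using fixed_edge_ends_fixed[OF eF] by auto
    have a: "a \<in> V" and b: "b \<in> V" using PXarc_PXV1[OF ab(1)] PXarc_PXV2[OF ab(1)] by auto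
    obtain c where c: "c < 2" "b = out_nb a c" using ab(1) unfolding PXarc_iff_out_nb by blast
    have "(layer a + j) mod r \<noteq> i" if j: "j \<le> s" for j
    proof (cases "j < s")
      case True then show ?thesis using fixed_vertex_avoids_flipped[OF i a ga] by simp
    next
      case False
      then have "(layer b + (s - 1)) mod r = (layer a + j) mod r"
        unfolding layer_PXarc[OF ab(1)] using j s_pos by (subst mod_add_left_eq) simp
      then show ?thesis using fixed_vertex_avoids_flipped[OF i b gb, of "s - 1"] s_pos by simp
    qed
    then have "(a, c) \<in> A \<times> {0,1}" using a c layer_less[OF a] unfolding A_def G_def by auto
    then show "e \<in> (\<lambda>(a,c). {a, out_nb a c}) ` (A \<times> {0,1})"
      using ab(2) c(2) by (intro rev_image_eqI[of "(a,c)"]) auto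
  qed
  have fA: "finite A" unfolding A_def using finite_PXV by simp
  have "i < r" using i by (simp add: flipped_layers_def)
  then have cA: "card A = (r - Suc s) * 2 ^ s"
    unfolding A_def using card_vertices_in_layers[of G] card_layers_avoiding unfolding G_def by auto
  have "card fixed_edges \<le> card ((\<lambda>(a,c). {a, out_nb a c}) ` (A \<times> {0,1}))"
    using sub fA by (intro card_mono) auto
  also have "\<dots> \<le> card (A \<times> {0::nat,1})" using fA by (intro card_image_le) auto
  finally show ?thesis using cA by (simp add: card_cartesian_product)
qed

theorem high_fpr_if_arc_layer_preserving:
  assumes ne: "\<exists>v\<in>V. g v \<noteq> v" and fpr: "fpr_edges (PXE r s) g > 1 / 3"
  shows "3 * s < 2 * r - 3 \<and> (\<exists>k\<in>PXK r. \<forall>v\<in>V. g v = map k v)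
    \<and> (\<forall>e\<in>PXE r s. g ` e = e \<longrightarrow> (\<forall>v\<in>e. g v = v))"
proof -
  obtain i where "i \<in> flipped_layers" using flipped_layers_nonempty[OF ne] by blast
  then have "card fixed_edges \<le> (r - Suc s) * 2 ^ s * 2" by (rule card_fixed_edges_if_flipped)
  moreover have "2 * (r * 2 ^ s) < 3 * card fixed_edges"
    using card_PXE_less_fixed_edges[OF fpr] card_PXE card_PXV by simp
  ultimately have "r * (2 * 2 ^ s) < (3 * (r - Suc s)) * (2 * 2 ^ s)" by (simp add: algebra_simps)
  then have "3 * s < 2 * r - 3" using s_less_r by simp
  moreover have "PXtau_set flipped_layers \<in> PXK r"
    by (rule PXtau_set_PXK) (auto simp: flipped_layers_def)
  ultimately show ?thesis
    using g_eq_map_PXtau_set fixed_edge_ends_fixed by (auto simp: fixed_edges_def)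
qed

end

context praeger_xu_aut begin

theorem high_fpr_if_r_ne_4:
  assumes r4: "r \<noteq> 4" and ne: "\<exists>v\<in>V. g v \<noteq> v" and fpr: "fpr_edges (PXE r s) g > 1 / 3"
  shows "3 * s < 2 * r - 3 \<and> (\<exists>k\<in>PXK r. \<forall>v\<in>V. g v = map k v)
    \<and> (\<forall>e\<in>PXE r s. g ` e = e \<longrightarrow> (\<forall>v\<in>e. g v = v))"
proof -
  obtain v0 where v0: "v0 \<in> V" using ne by blast
  have "keeps_orientation v0"
  proof (rule ccontr)
    assume "\<not> keeps_orientation v0"
    then have "card fixed_edges \<le> 2 * 2 ^ s"
      using card_fixed_edges_if_reversing[OF g_reverses_arcs[OF r4 v0] v0] by blast
    then show False using fpr_edges_le_one_third fpr by fastforce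
  qed
  then have arcs: "\<And>a b. PXarc r s a b \<Longrightarrow> PXarc r s (g a) (g b)"
    using g_preserves_arcs[OF r4 v0] by blast
  obtain d where d: "d < r" "\<forall>v\<in>V. layer (g v) = (layer v + d) mod r"
    using layer_shift[OF arcs v0] by blast
  have "d = 0"
  proof (rule ccontr)
    assume "d \<noteq> 0"
    then have "fixed_edges = {}" using fixed_edges_empty_if_rotation d by simp
    then show False using card_PXE_less_fixed_edges[OF fpr] by simp
  qed
  then interpret arc_layer_preserving r s g
    using arcs d layer_less by unfold_locales simp_all
  show ?thesis using high_fpr_if_arc_layer_preserving[OF ne fpr] .
qed

end

section \<open>The case \<open>r = 4\<close>\<close>

text \<open>Executable versions of the vertex set and the neighbourhoods, for two finite checks on
  \<open>C(4, 2)\<close> and \<open>C(4, 3)\<close> evaluated by \<open>code_simp\<close>: distinct vertices have at most two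
  common neighbours, and an automorphism fixing a vertex and its neighbours fixes the
  neighbours of each of these neighbours.\<close>

definition nb_list :: "nat \<Rightarrow> nat \<Rightarrow> (nat \<times> nat) list \<Rightarrow> (nat \<times> nat) list list" where
  "nb_list r s v = [tl v @ [((fst (v!0) + s) mod r, 0)], tl v @ [((fst (v!0) + s) mod r, 1)],
     ((fst (v!0) + r - 1) mod r, 0) # butlast v, ((fst (v!0) + r - 1) mod r, 1) # butlast v]"

definition vertex_list :: "nat \<Rightarrow> nat \<Rightarrow> (nat \<times> nat) list list" where
  "vertex_list r s =
     concat (map (\<lambda>y. map (\<lambda>bs. map (\<lambda>j. ((y + j) mod r, bs ! j)) [0..<s]) (List.n_lists s [0,1])) [0..<r])"

definition common_nbs_check :: "nat \<Rightarrow> nat \<Rightarrow> bool" where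
  "common_nbs_check r s \<longleftrightarrow> (\<forall>a\<in>set (vertex_list r s). \<forall>b\<in>set (vertex_list r s). a \<noteq> b \<longrightarrow>
     length (filter (\<lambda>z. z \<in> set (nb_list r s b)) (nb_list r s a)) \<le> 2)"

text \<open>If every vertex of \<open>F\<close> is fixed, so is the neighbour \<open>w\<close> of \<open>u \<in> F\<close>: its image is again
  a common neighbour of \<open>u\<close> and \<open>y\<close>, and the only such vertex outside \<open>F\<close> is \<open>w\<close> itself.\<close>

definition forced_fixed :: "nat \<Rightarrow> nat \<Rightarrow> (nat \<times> nat) list list \<Rightarrow> (nat \<times> nat) list \<Rightarrow> (nat \<times> nat) list \<Rightarrow> bool" where
  "forced_fixed r s F u w \<longleftrightarrow> (\<exists>y\<in>set F. w \<in> set (nb_list r s y) \<and>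
     (\<forall>z\<in>set (nb_list r s u). z \<in> set (nb_list r s y) \<longrightarrow> z \<in> set F \<or> z = w))"

definition known_fixed :: "nat \<Rightarrow> nat \<Rightarrow> (nat \<times> nat) list \<Rightarrow> (nat \<times> nat) list \<Rightarrow> (nat \<times> nat) list list" where
  "known_fixed r s v u = (v # nb_list r s v) @ filter (forced_fixed r s (v # nb_list r s v) u) (nb_list r s u)"

definition rigidity_check :: "nat \<Rightarrow> nat \<Rightarrow> bool" where
  "rigidity_check r s \<longleftrightarrow> (\<forall>v\<in>set (vertex_list r s). \<forall>u\<in>set (nb_list r s v). \<forall>w\<in>set (nb_list r s u).
     w \<in> set (known_fixed r s v u) \<or> forced_fixed r s (known_fixed r s v u) u w)"

lemma rigidity_check_4_2: "rigidity_check 4 2" by code_simp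
lemma rigidity_check_4_3: "rigidity_check 4 3" by code_simp
lemma common_nbs_check_4_2: "common_nbs_check 4 2" by code_simp
lemma common_nbs_check_4_3: "common_nbs_check 4 3" by code_simp

context praeger_xu begin

lemma set_vertex_list: "set (vertex_list r s) = V"
proof -
  have bl: "set (List.n_lists s [0,1]) = bit_lists" unfolding bit_lists_def by (auto simp: set_n_lists)
  have "set (vertex_list r s) = (\<Union>y\<in>{..<r}. bits_vertex y ` bit_lists)"
    unfolding vertex_list_def bits_vertex_def by (auto simp: bl[symmetric])
  also have "\<dots> = (\<Union>y\<in>{..<r}. layer_vertices y)" using layer_vertices_eq by simp
  also have "\<dots> = V" using layer_less by (auto simp: layer_vertices_def)
  finally show ?thesis .
qed

lemma set_nb_list: "v \<in> V \<Longrightarrow> set (nb_list r s v) = nbs v"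
  unfolding nb_list_def nbs_eq out_nbs_def in_nbs_def out_nb_def in_nb_def layer_def by auto

lemma nbs_sym: "w \<in> nbs v \<longleftrightarrow> v \<in> nbs w"
  unfolding nbs_def PXadj_def by auto

lemma odd_layer_sum_PXarc: "r = 4 \<Longrightarrow> PXarc r s a b \<Longrightarrow> odd (layer a + layer b)"
proof -
  assume r: "r = 4" and ab: "PXarc r s a b"
  have "layer a < 4" using layer_less[OF PXarc_PXV1[OF ab]] r by simp
  moreover have "layer b = (layer a + 1) mod 4" using layer_PXarc[OF ab] r by simp
  ultimately show ?thesis by presburger
qed

lemma odd_layer_sum_PXadj: "r = 4 \<Longrightarrow> PXadj r s a b \<Longrightarrow> odd (layer a + layer b)"
  using odd_layer_sum_PXarc[of a b] odd_layer_sum_PXarc[of b a] unfolding PXadj_iff by (metis add.commute)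

lemma common_nbs_empty_if_PXadj: "r = 4 \<Longrightarrow> PXadj r s a b \<Longrightarrow> nbs a \<inter> nbs b = {}"
proof (rule ccontr)
  assume r: "r = 4" and ab: "PXadj r s a b" and "nbs a \<inter> nbs b \<noteq> {}"
  then obtain z where "PXadj r s a z" "PXadj r s b z" unfolding nbs_def by auto
  then have "odd (layer a + layer z)" "odd (layer b + layer z)" "odd (layer a + layer b)"
    using odd_layer_sum_PXadj[OF r] ab by blast+
  then show False by presburger
qed

lemma PXarc_if_s1:
  assumes s: "s = 1" and x: "x \<in> V" and y: "y \<in> V" and l: "layer y = (layer x + 1) mod r"
  shows "PXarc r s x y"
proof -
  have "y = [y ! 0]" using length_PXV[OF y] s by (cases y) auto
  also have "y ! 0 = ((layer y + 0) mod r, snd (y ! 0))" using nth_PXV[OF y, of 0] s by simp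
  finally have "y = [((layer x + 1) mod r, snd (y ! 0))]" using l layer_less[OF y] by simp
  moreover have "tl x = []" using length_PXV[OF x] s by (cases x) auto
  ultimately have "y = out_nb x (snd (y ! 0))" unfolding out_nb_def using s by simp
  moreover have "snd (y ! 0) < 2" using snd_nth_PXV[OF y, of 0] s by simp
  ultimately show ?thesis unfolding PXarc_iff_out_nb using x by blast
qed

lemma PXadj_iff_odd_layer_sum_4_1:
  assumes "r = 4" "s = 1" "a \<in> V" "b \<in> V"
  shows "PXadj r s a b \<longleftrightarrow> odd (layer a + layer b)"
proof
  assume "odd (layer a + layer b)"
  moreover have "layer a < 4" "layer b < 4" using layer_less assms by auto
  ultimately have "layer b = (layer a + 1) mod r \<or> layer a = (layer b + 1) mod r"
    using assms(1) by presburger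
  then show "PXadj r s a b" unfolding PXadj_iff using PXarc_if_s1 assms by blast
qed (use odd_layer_sum_PXadj assms(1) in blast)

lemma card_common_nbs_le_2:
  assumes "common_nbs_check r s" "a \<in> V" "b \<in> V" "a \<noteq> b"
  shows "card (nbs a \<inter> nbs b) \<le> 2"
proof -
  have eq: "nbs a \<inter> nbs b = set (filter (\<lambda>z. z \<in> set (nb_list r s b)) (nb_list r s a))"
    using set_nb_list assms(2,3) by auto
  have "card (nbs a \<inter> nbs b) \<le> length (filter (\<lambda>z. z \<in> set (nb_list r s b)) (nb_list r s a))"
    unfolding eq by (rule card_length)
  also have "\<dots> \<le> 2" using assms set_vertex_list unfolding common_nbs_check_def by blast
  finally show ?thesis .
qed

lemma card_plus_card_le_card_Diff:
  assumes DV: "D \<subseteq> V" and SD: "S \<subseteq> V - D"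
    and inner: "\<And>v. v \<in> D \<Longrightarrow> card (nbs v \<inter> D) \<le> 2"
    and outer: "\<And>w. w \<in> V - D \<Longrightarrow> card (nbs w \<inter> D) \<le> 2"
    and isolated: "\<And>w. w \<in> S \<Longrightarrow> nbs w \<inter> D = {}"
  shows "card D + card S \<le> card (V - D)"
proof -
  define M where "M = V - D"
  have fD: "finite D" and fM: "finite M" and fS: "finite S"
    using finite_subset[OF DV finite_PXV] finite_subset[OF SD] finite_PXV unfolding M_def by auto
  define X where "X = Sigma D (\<lambda>v. nbs v \<inter> M)"
  have "2 * card D \<le> (\<Sum>v\<in>D. card (nbs v \<inter> M))"
  proof -
    have "card (nbs v \<inter> M) = card (nbs v) - card (nbs v \<inter> D)" if "v \<in> D" for v
    proof -
      have "nbs v \<inter> M = nbs v - (nbs v \<inter> D)" using nbs_PXV that DV unfolding M_def by blast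
      then show ?thesis using finite_nbs that DV by (auto simp: card_Diff_subset)
    qed
    then have "\<forall>v\<in>D. 2 \<le> card (nbs v \<inter> M)" using card_nbs inner DV by fastforce
    then have "(\<Sum>v\<in>D. 2) \<le> (\<Sum>v\<in>D. card (nbs v \<inter> M))" by (intro sum_mono) auto
    then show ?thesis by simp
  qed
  also have "\<dots> = card X"
    unfolding X_def using fD DV finite_nbs by (intro card_SigmaI[symmetric]) auto
  also have "\<dots> = card (prod.swap ` X)" by (simp add: card_image)
  also have "prod.swap ` X = Sigma M (\<lambda>w. nbs w \<inter> D)" unfolding X_def M_def using nbs_sym by auto
  also have "card \<dots> = (\<Sum>w\<in>M. card (nbs w \<inter> D))"
    using fM finite_nbs unfolding M_def by (intro card_SigmaI) auto
  also have "\<dots> = (\<Sum>w\<in>M - S. card (nbs w \<inter> D)) + (\<Sum>w\<in>S. card (nbs w \<inter> D))"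
    using sum.subset_diff[of S M] SD fM unfolding M_def by simp
  also have "\<dots> = (\<Sum>w\<in>M - S. card (nbs w \<inter> D))" using isolated by simp
  also have "\<dots> \<le> (\<Sum>w\<in>M - S. 2)" using outer unfolding M_def by (intro sum_mono) auto
  also have "\<dots> = 2 * card (M - S)" by simp
  finally have "card D \<le> card M - card S" using card_Diff_subset[OF fS] SD unfolding M_def by simp
  moreover have "card S \<le> card M" using card_mono[OF fM] SD unfolding M_def by simp
  ultimately show ?thesis unfolding M_def by linarith
qed

lemma card_arcs_within_le:
  assumes DV: "D \<subseteq> V" and inner: "\<And>v. v \<in> D \<Longrightarrow> card (nbs v \<inter> D) \<le> 2"
  shows "card {(a, b). a \<in> D \<and> b \<in> D \<and> PXarc r s a b} \<le> card D"
proof -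
  define A where "A = {(a, b). a \<in> D \<and> b \<in> D \<and> PXarc r s a b}"
  have fD: "finite D" using finite_PXV DV finite_subset by auto
  have fo: "finite (out_nbs a \<inter> D)" and fi: "finite (in_nbs a \<inter> D)" for a
    by (simp_all add: out_nbs_def in_nbs_def)
  have out: "card A = (\<Sum>a\<in>D. card (out_nbs a \<inter> D))"
  proof -
    have "A = Sigma D (\<lambda>a. out_nbs a \<inter> D)" unfolding A_def using mem_out_nbs_iff DV by auto
    then show ?thesis using fD fo by (simp add: card_SigmaI)
  qed
  have in': "card A = (\<Sum>a\<in>D. card (in_nbs a \<inter> D))"
  proof -
    have "prod.swap ` A = Sigma D (\<lambda>b. in_nbs b \<inter> D)"
      unfolding A_def using mem_in_nbs_iff DV by (auto simp: image_iff)
    then have "card (prod.swap ` A) = (\<Sum>b\<in>D. card (in_nbs b \<inter> D))" using fD fi by (simp add: card_SigmaI)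
    then show ?thesis by (simp add: card_image)
  qed
  have split: "card (out_nbs a \<inter> D) + card (in_nbs a \<inter> D) = card (nbs a \<inter> D)" if "a \<in> D" for a
  proof -
    have "nbs a \<inter> D = (out_nbs a \<inter> D) \<union> (in_nbs a \<inter> D)" using nbs_eq that DV by blast
    moreover have "(out_nbs a \<inter> D) \<inter> (in_nbs a \<inter> D) = {}" using out_in_nbs_disjoint that DV by blast
    ultimately show ?thesis using fo fi by (simp add: card_Un_disjoint)
  qed
  have "2 * card A = (\<Sum>a\<in>D. card (out_nbs a \<inter> D) + card (in_nbs a \<inter> D))"
    using out in' by (simp add: sum.distrib)
  also have "\<dots> = (\<Sum>a\<in>D. card (nbs a \<inter> D))" using split by (rule sum.cong[OF refl])
  also have "\<dots> \<le> (\<Sum>a\<in>D. 2)" using inner by (intro sum_mono) auto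
  also have "\<dots> = 2 * card D" by simp
  finally show ?thesis unfolding A_def by simp
qed

end

context praeger_xu_aut begin

definition fixed_vertices where "fixed_vertices = {v \<in> V. g v = v}"

lemma fixed_nbs_subset_nbs_image: "w \<in> V \<Longrightarrow> nbs w \<inter> fixed_vertices \<subseteq> nbs (g w)"
proof
  fix z assume w: "w \<in> V" and z: "z \<in> nbs w \<inter> fixed_vertices"
  then have "g z \<in> nbs (g w)" using nbs_image[OF w] by blast
  then show "z \<in> nbs (g w)" using z by (simp add: fixed_vertices_def)
qed

lemma forced_fixed_sound:
  assumes FV: "set F \<subseteq> V" and fx: "\<forall>x\<in>set F. g x = x" and u: "u \<in> set F"
    and w: "w \<in> nbs u" and forced: "forced_fixed r s F u w"
  shows "g w = w"
proof -
  obtain y where y: "y \<in> set F" "w \<in> set (nb_list r s y)"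
    "\<forall>z\<in>set (nb_list r s u). z \<in> set (nb_list r s y) \<longrightarrow> z \<in> set F \<or> z = w"
    using forced unfolding forced_fixed_def by blast
  have uV: "u \<in> V" and yV: "y \<in> V" using FV u y by auto
  have wV: "w \<in> V" using w nbs_PXV[OF uV] by blast
  have "g w \<in> nbs u" using nbs_image[OF uV] fx u w by (metis imageI)
  moreover have "g w \<in> nbs y" using nbs_image[OF yV] fx y set_nb_list[OF yV] by (metis imageI)
  ultimately have "g w \<in> set F \<or> g w = w" using y(3) set_nb_list[OF uV] set_nb_list[OF yV] by blast
  then show "g w = w"
  proof
    assume "g w \<in> set F"
    then have "g (g w) = g w" using fx by blast
    then show "g w = w" using g_eq[OF g_PXV[OF wV] wV] by simp
  qed
qed

lemma rigidity_step:
  assumes c: "rigidity_check r s" and v: "v \<in> V" and gv: "g v = v"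
    and nv: "\<forall>x\<in>nbs v. g x = x" and u: "u \<in> nbs v" and w: "w \<in> nbs u"
  shows "g w = w"
proof -
  define F0 where "F0 = v # nb_list r s v"
  define F1 where "F1 = known_fixed r s v u"
  have uV: "u \<in> V" using u nbs_PXV[OF v] by blast
  have F0V: "set F0 \<subseteq> V" using v nbs_PXV[OF v] set_nb_list[OF v] unfolding F0_def by auto
  have F0x: "\<forall>x\<in>set F0. g x = x" using gv nv set_nb_list[OF v] unfolding F0_def by auto
  have uF0: "u \<in> set F0" using u set_nb_list[OF v] unfolding F0_def by auto
  have F1V: "set F1 \<subseteq> V"
    using F0V nbs_PXV[OF uV] set_nb_list[OF uV] unfolding F1_def known_fixed_def F0_def by auto
  have F1x: "\<forall>x\<in>set F1. g x = x"
  proof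
    fix x assume "x \<in> set F1"
    then have "x \<in> set F0 \<or> (x \<in> nbs u \<and> forced_fixed r s F0 u x)"
      using set_nb_list[OF uV] unfolding F1_def known_fixed_def F0_def by auto
    then show "g x = x" using F0x forced_fixed_sound[OF F0V F0x uF0] by blast
  qed
  have uF1: "u \<in> set F1" using uF0 unfolding F1_def known_fixed_def F0_def by (simp only: set_append UnI1)
  have "w \<in> set F1 \<or> forced_fixed r s F1 u w"
    using c v u w set_nb_list[OF v] set_nb_list[OF uV] set_vertex_list
    unfolding rigidity_check_def F1_def by blast
  then show "g w = w" using F1x forced_fixed_sound[OF F1V F1x uF1 w] by blast
qed

lemma local_rigidity:
  assumes c: "rigidity_check r s" and v0: "v0 \<in> V" "g v0 = v0" "\<forall>x\<in>nbs v0. g x = x"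
    and w: "w \<in> V"
  shows "g w = w"
proof -
  have "(PXarc r s)\<^sup>*\<^sup>* v0 w" using PXarc_connected[OF v0(1) w] .
  then have "g w = w \<and> (\<forall>x\<in>nbs w. g x = x)"
  proof (induction rule: rtranclp_induct)
    case base then show ?case using v0 by simp
  next
    case (step a b)
    have "b \<in> nbs a" using step(2) by (simp add: nbs_def PXadj_iff)
    then show ?case using rigidity_step[OF c PXarc_PXV1[OF step(2)]] step(3) by blast
  qed
  then show ?thesis by simp
qed

lemma card_fixed_nbs_of_fixed:
  assumes c: "rigidity_check r s" and ne: "\<exists>v\<in>V. g v \<noteq> v" and v: "v \<in> fixed_vertices"
  shows "card (nbs v \<inter> fixed_vertices) \<le> 2"
proof (rule ccontr)
  let ?D = fixed_vertices
  assume many: "\<not> ?thesis"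
  have vV: "v \<in> V" and gv: "g v = v" using v unfolding fixed_vertices_def by auto
  have "card (nbs v - ?D) = card (nbs v) - card (nbs v \<inter> ?D)"
    using finite_nbs[OF vV] by (simp add: card_Diff_subset_Int Diff_Int2)
  then have c1: "card (nbs v - ?D) \<le> 1" using many card_nbs[OF vV] by simp
  have "g x = x" if x: "x \<in> nbs v" for x
  proof (rule ccontr)
    assume gx: "g x \<noteq> x"
    have xV: "x \<in> V" using x nbs_PXV[OF vV] by blast
    have "g x \<in> nbs v" using nbs_image[OF vV] gv x by (metis imageI)
    moreover have "g x \<notin> ?D" using gx g_eq[OF g_PXV[OF xV] xV] by (auto simp: fixed_vertices_def)
    moreover have "x \<notin> ?D" using gx by (simp add: fixed_vertices_def)
    ultimately have "x \<in> nbs v - ?D" "g x \<in> nbs v - ?D" using x by auto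
    moreover have "\<forall>a\<in>nbs v - ?D. \<forall>b\<in>nbs v - ?D. a = b"
      using c1 card_le_Suc0_iff_eq[OF finite_Diff[OF finite_nbs[OF vV]]] by simp
    ultimately show False using gx by blast
  qed
  then have "\<forall>w\<in>V. g w = w" using local_rigidity[OF c vV gv] by blast
  then show False using ne by blast
qed

lemma card_fixed_nbs_of_moved:
  assumes "common_nbs_check r s" and w: "w \<in> V - fixed_vertices"
  shows "card (nbs w \<inter> fixed_vertices) \<le> 2"
proof -
  have wV: "w \<in> V" and "g w \<noteq> w" using w unfolding fixed_vertices_def by auto
  then have "card (nbs w \<inter> nbs (g w)) \<le> 2"
    using card_common_nbs_le_2[OF assms(1) wV g_PXV[OF wV]] by simp
  moreover have "nbs w \<inter> fixed_vertices \<subseteq> nbs w \<inter> nbs (g w)"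
    using fixed_nbs_subset_nbs_image[OF wV] by blast
  then have "card (nbs w \<inter> fixed_vertices) \<le> card (nbs w \<inter> nbs (g w))"
    using finite_nbs[OF wV] by (intro card_mono) auto
  ultimately show ?thesis by simp
qed

lemma fixed_nbs_empty_if_swapped:
  "r = 4 \<Longrightarrow> w \<in> V \<Longrightarrow> PXadj r s w (g w) \<Longrightarrow> nbs w \<inter> fixed_vertices = {}"
  using fixed_nbs_subset_nbs_image common_nbs_empty_if_PXadj by blast

lemma fixed_edges_subset_arcs_and_swaps:
  "fixed_edges \<subseteq> (\<lambda>(a, b). {a, b}) ` {(a, b). a \<in> fixed_vertices \<and> b \<in> fixed_vertices \<and> PXarc r s a b}
     \<union> (\<lambda>a. {a, g a}) ` {a \<in> V. PXarc r s a (g a) \<and> g (g a) = a}"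
proof
  fix e assume "e \<in> fixed_edges"
  then obtain a b where ab: "PXarc r s a b" "e = {a, b}" "(g a = a \<and> g b = b) \<or> (g a = b \<and> g b = a)"
    using fixed_edge_cases by blast
  have a: "a \<in> V" and b: "b \<in> V" using PXarc_PXV1[OF ab(1)] PXarc_PXV2[OF ab(1)] by auto
  from ab(3) show "e \<in> (\<lambda>(a, b). {a, b}) ` {(a, b). a \<in> fixed_vertices \<and> b \<in> fixed_vertices \<and> PXarc r s a b}
     \<union> (\<lambda>a. {a, g a}) ` {a \<in> V. PXarc r s a (g a) \<and> g (g a) = a}"
  proof
    assume "g a = a \<and> g b = b"
    then have "(a, b) \<in> {(a, b). a \<in> fixed_vertices \<and> b \<in> fixed_vertices \<and> PXarc r s a b}"
      using a b ab(1) by (simp add: fixed_vertices_def)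
    then show ?thesis using ab(2) by (intro UnI1 rev_image_eqI[of "(a, b)"]) auto
  next
    assume "g a = b \<and> g b = a"
    then have "a \<in> {a \<in> V. PXarc r s a (g a) \<and> g (g a) = a}" using a ab(1) by simp
    then show ?thesis using ab(2) \<open>g a = b \<and> g b = a\<close> by (intro UnI2 rev_image_eqI[of a]) auto
  qed
qed

lemma card_swapping_arcs:
  "2 * card {a \<in> V. PXarc r s a (g a) \<and> g (g a) = a} \<le> card {w \<in> V - fixed_vertices. PXadj r s w (g w)}"
proof -
  define T where "T = {a \<in> V. PXarc r s a (g a) \<and> g (g a) = a}"
  have TV: "T \<subseteq> V" and fT: "finite T" using finite_PXV unfolding T_def by auto
  have "T \<inter> g ` T = {}"
  proof (rule ccontr)
    assume "T \<inter> g ` T \<noteq> {}"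
    then obtain b where "b \<in> T" "g b \<in> T" by blast
    then have "PXarc r s b (g b)" "PXarc r s (g b) b" unfolding T_def by auto
    then show False using PXarc_asym by blast
  qed
  then have "card (T \<union> g ` T) = card T + card (g ` T)" using fT by (simp add: card_Un_disjoint)
  also have "card (g ` T) = card T" using card_image[OF inj_on_subset[OF g_inj TV]] .
  finally have "2 * card T = card (T \<union> g ` T)" by simp
  also have "T \<union> g ` T \<subseteq> {w \<in> V - fixed_vertices. PXadj r s w (g w)}"
  proof
    fix w assume "w \<in> T \<union> g ` T"
    then obtain a where a: "a \<in> T" "w = a \<or> w = g a" by blast
    then have aV: "a \<in> V" and arc: "PXarc r s a (g a)" and gga: "g (g a) = a" unfolding T_def by auto
    have "g w \<noteq> w" "PXadj r s w (g w)" using a(2) arc gga PXarc_neq[OF arc] by (auto simp: PXadj_iff)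
    then show "w \<in> {w \<in> V - fixed_vertices. PXadj r s w (g w)}"
      using a(2) aV g_PXV[OF aV] by (auto simp: fixed_vertices_def)
  qed
  then have "card (T \<union> g ` T) \<le> card {w \<in> V - fixed_vertices. PXadj r s w (g w)}"
    using finite_PXV by (intro card_mono) auto
  finally show ?thesis unfolding T_def .
qed

lemma card_fixed_edges_if_r4:
  assumes r: "r = 4" and checks: "rigidity_check r s" "common_nbs_check r s"
    and ne: "\<exists>v\<in>V. g v \<noteq> v"
  shows "3 * card fixed_edges \<le> card (PXE r s)"
proof -
  let ?D = fixed_vertices
  let ?A = "{(a, b). a \<in> ?D \<and> b \<in> ?D \<and> PXarc r s a b}"
  let ?T = "{a \<in> V. PXarc r s a (g a) \<and> g (g a) = a}"
  let ?S = "{w \<in> V - ?D. PXadj r s w (g w)}"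
  have DV: "?D \<subseteq> V" by (auto simp: fixed_vertices_def)
  have inner: "\<And>v. v \<in> ?D \<Longrightarrow> card (nbs v \<inter> ?D) \<le> 2"
    using card_fixed_nbs_of_fixed[OF checks(1) ne] .
  have fD: "finite ?D" using finite_subset[OF DV finite_PXV] .
  have fA: "finite ?A" by (rule finite_subset[of _ "?D \<times> ?D"]) (use fD in auto)
  have fT: "finite ?T" using finite_PXV by simp
  have "card fixed_edges \<le> card ((\<lambda>(a, b). {a, b}) ` ?A \<union> (\<lambda>a. {a, g a}) ` ?T)"
    by (rule card_mono[OF _ fixed_edges_subset_arcs_and_swaps]) (use fA fT in simp)
  also have "\<dots> \<le> card ((\<lambda>(a, b). {a, b}) ` ?A) + card ((\<lambda>a. {a, g a}) ` ?T)" by (rule card_Un_le)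
  also have "\<dots> \<le> card ?A + card ?T" using card_image_le[OF fA] card_image_le[OF fT] by (rule add_mono)
  finally have "card fixed_edges \<le> card ?A + card ?T" .
  moreover have "card ?A \<le> card ?D" using card_arcs_within_le[OF DV inner] .
  moreover have "2 * card ?T \<le> card ?S" by (rule card_swapping_arcs)
  moreover have "card ?D + card ?S \<le> card (V - ?D)"
  proof (rule card_plus_card_le_card_Diff[OF DV _ inner])
    show "?S \<subseteq> V - ?D" by blast
    show "card (nbs w \<inter> ?D) \<le> 2" if "w \<in> V - ?D" for w
      using card_fixed_nbs_of_moved[OF checks(2) that] .
    show "nbs w \<inter> ?D = {}" if "w \<in> ?S" for w
      using fixed_nbs_empty_if_swapped[OF r] that by blast
  qed
  moreover have "card V = card ?D + card (V - ?D)"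
    using card_Diff_subset[OF fD DV] card_mono[OF finite_PXV DV] by simp
  ultimately show ?thesis using card_PXE by linarith
qed

lemma odd_layer_sum_image_if_swap_4_1:
  assumes r: "r = 4" and s: "s = 1" and ab: "PXarc r s a b" and sw: "g a = b" "g b = a"
    and w: "w \<in> V"
  shows "odd (layer (g w) + layer w)"
proof -
  have a: "a \<in> V" and b: "b \<in> V" using PXarc_PXV1[OF ab] PXarc_PXV2[OF ab] by auto
  have oab: "odd (layer a + layer b)" using odd_layer_sum_PXarc[OF r ab] .
  note adj = PXadj_iff_odd_layer_sum_4_1[OF r s]
  show ?thesis
  proof (cases "even (layer w + layer a)")
    case True
    then have "odd (layer w + layer b)" using oab by presburger
    then have "PXadj r s w b" using adj[OF w b] by simp
    then have "PXadj r s (g w) a" using g_adj[OF w b] sw by simp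
    then have "odd (layer (g w) + layer a)" using adj[OF g_PXV[OF w] a] by simp
    then show ?thesis using True by presburger
  next
    case False
    then have "PXadj r s w a" using adj[OF w a] by simp
    then have "PXadj r s (g w) b" using g_adj[OF w a] sw by simp
    then have "odd (layer (g w) + layer b)" using adj[OF g_PXV[OF w] b] by simp
    then show ?thesis using False oab by presburger
  qed
qed

lemma card_fixed_edges_if_swap_4_1:
  assumes r: "r = 4" and s: "s = 1" and ab: "PXarc r s a b" and sw: "g a = b" "g b = a"
  shows "card fixed_edges \<le> 4"
proof -
  define T where "T = {x \<in> V. layer x \<in> {0, 2}}"
  have "fixed_edges \<subseteq> (\<lambda>x. {x, g x}) ` T"
  proof
    fix e assume "e \<in> fixed_edges"
    then obtain x y where xy: "PXarc r s x y" "e = {x, y}" "(g x = x \<and> g y = y) \<or> (g x = y \<and> g y = x)"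
      using fixed_edge_cases by blast
    have x: "x \<in> V" and y: "y \<in> V" using PXarc_PXV1[OF xy(1)] PXarc_PXV2[OF xy(1)] by auto
    have "odd (layer (g x) + layer x)" by (rule odd_layer_sum_image_if_swap_4_1[OF r s ab sw x])
    then have "g x \<noteq> x" by auto
    then have gxy: "g x = y" "g y = x" using xy(3) by auto
    have "odd (layer x + layer y)" using odd_layer_sum_PXarc[OF r xy(1)] .
    moreover have "layer x < 4" "layer y < 4" using layer_less[OF x] layer_less[OF y] r by auto
    ultimately have "layer x = 0 \<or> layer x = 2 \<or> layer y = 0 \<or> layer y = 2" by presburger
    then have "x \<in> T \<or> y \<in> T" using x y unfolding T_def by auto
    moreover have "e = {x, g x}" "e = {y, g y}" using xy(2) gxy by auto
    ultimately show "e \<in> (\<lambda>x. {x, g x}) ` T" by blast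
  qed
  moreover have fT: "finite T" unfolding T_def using finite_PXV by simp
  ultimately have "card fixed_edges \<le> card ((\<lambda>x. {x, g x}) ` T)" by (intro card_mono) simp_all
  also have "\<dots> \<le> card T" using fT by (rule card_image_le)
  also have "card T = 4" unfolding T_def using card_vertices_in_layers[of "{0, 2}"] r s by simp
  finally show ?thesis .
qed

lemma fixed_edges_fixed_pointwise_4_1:
  assumes r: "r = 4" and s: "s = 1" and fpr: "fpr_edges (PXE r s) g > 1 / 3"
  shows "\<forall>e\<in>PXE r s. g ` e = e \<longrightarrow> (\<forall>v\<in>e. g v = v)"
proof (intro ballI impI)
  fix e v assume "e \<in> PXE r s" "g ` e = e" "v \<in> e"
  then have "e \<in> fixed_edges" by (simp add: fixed_edges_def)
  then obtain a b where ab: "PXarc r s a b" "e = {a, b}" "(g a = a \<and> g b = b) \<or> (g a = b \<and> g b = a)"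
    using fixed_edge_cases by blast
  show "g v = v"
  proof (rule ccontr)
    assume "g v \<noteq> v"
    then have "g a = b" "g b = a" using ab(2,3) \<open>v \<in> e\<close> by auto
    then have "card fixed_edges \<le> 4" using card_fixed_edges_if_swap_4_1[OF r s ab(1)] by blast
    moreover have "card (PXE r s) = 16" using card_PXE card_PXV r s by simp
    ultimately show False using card_PXE_less_fixed_edges[OF fpr] by simp
  qed
qed

lemma s_eq_1_if_r4:
  assumes r: "r = 4" and ne: "\<exists>v\<in>V. g v \<noteq> v" and fpr: "fpr_edges (PXE r s) g > 1 / 3"
  shows "s = 1"
proof (rule ccontr)
  assume "s \<noteq> 1"
  then have "s = 2 \<or> s = 3" using s_pos s_less_r r by linarith
  then have "rigidity_check r s \<and> common_nbs_check r s"
    using rigidity_check_4_2 rigidity_check_4_3 common_nbs_check_4_2 common_nbs_check_4_3 r by blast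
  then have "3 * card fixed_edges \<le> card (PXE r s)" using card_fixed_edges_if_r4[OF r _ _ ne] by blast
  then show False using card_PXE_less_fixed_edges[OF fpr] by linarith
qed

end

theorem lemma3p5:
  fixes r s :: nat and g :: "(nat \<times> nat) list \<Rightarrow> (nat \<times> nat) list"
  assumes "r \<ge> 3" and "1 \<le> s" and "s \<le> r - 1"
    and "is_graph_aut (PXV r s) (PXadj r s) g"
    and "\<exists>v \<in> PXV r s. g v \<noteq> v"
    and "fpr_edges (PXE r s) g > 1 / 3"
  shows "3 * s < 2 * r - 3
     \<and> ((\<exists>k \<in> PXK r. \<forall>v \<in> PXV r s. g v = map k v) \<or> (r = 4 \<and> s = 1))
     \<and> (\<forall>e \<in> PXE r s. g ` e = e \<longrightarrow> (\<forall>v \<in> e. g v = v))"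
proof -
  interpret praeger_xu_aut r s g
    by unfold_locales (use assms in auto)
  show ?thesis
  proof (cases "r = 4")
    case True
    then have "s = 1" using s_eq_1_if_r4 assms(5,6) by blast
    then show ?thesis using fixed_edges_fixed_pointwise_4_1 True assms(6) by simp
  next
    case False
    then show ?thesis using high_fpr_if_r_ne_4 assms(5,6) by blast
  qed
qed

end
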